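(* Let $(H,\Delta)$ be a Hopf algebra with invariant functionals $\varphi,\psi=\varphi\circ S$ and modular element $\delta$, and let $(A,\alpha)$ be an $I$-Galois object. Then the functional $\varphi_A:A\to k$ is faithful, i.e. the pairing $A\times A\to k$, $(a,a')\mapsto\varphi_A(aa')$, is non-degenerate, and it is $\delta$-invariant: $(\varphi_A\otimes\mathrm{id})\alpha(a)=\varphi_A(a)\delta$ for all $a\in A$.
   Context: $H$ has invariant functionals: nonzero $\varphi,\psi:H\to k$ with $(\mathrm{id}\otimes\varphi)\Delta(h)=\varphi(h)1$, $(\psi\otimes\mathrm{id})\Delta(h)=\psi(h)1$; one may take $\psi=\varphi\circ S$. The modular element $\delta$ is the unique invertible grouplike element of $H$ with $\varphi(S(h))=\varphi(h\delta)$ for all $h$. An $I$-Galois object is a right $H$-comodule algebra $(A,\alpha)$ (possibly non-unital) with bijective Galois map $A\otimes_{A^\alpha}A\to A\otimes H$, $a\otimes b\mapsto(a\otimes1)\alpha(b)$, and coinvariant algebra $A^\alpha$ identified with $k_I=\bigoplus_{i\in I}k$, minimal idempotents $p_i$. $\Phi:A\to A^\alpha$, $\Phi(a)=(\mathrm{id}\otimes\varphi)\alpha(a)$; $\varphi_i:A\to k$ defined by $\Phi(a)=\sum_i\varphi_i(p_iap_i)p_i$ and $\varphi_i(a):=\varphi_i(p_iap_i)$; $\mathscr S:A^\alpha\to k$, $\sum_ia_ip_i\mapsto\sum_ia_i$; and $\varphi_A=\mathscr S\circ\Phi=\sum_i\varphi_i$ (a finite sum for each $a$). *)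

theory Defs
  imports Complex_Main
begin

text \<open>Tensors are represented by finite formal sums (lists of pairs / triples).
Two formal sums represent the same element of the algebraic tensor product iff
all (multi)linear forms agree on them (the dual of a tensor product of vector
spaces separates points).  For the balanced tensor product over a subalgebra B
we use B-balanced bilinear forms.\<close>

definition lin :: "('k::field \<Rightarrow> 'v::ab_group_add \<Rightarrow> 'v) \<Rightarrow> ('k \<Rightarrow> 'w::ab_group_add \<Rightarrow> 'w) \<Rightarrow> ('v \<Rightarrow> 'w) \<Rightarrow> bool" where
  "lin sV sW f \<longleftrightarrow> (\<forall>x y. f (x + y) = f x + f y) \<and> (\<forall>c x. f (sV c x) = sW c (f x))"

definition bilin :: "('k::field \<Rightarrow> 'v::ab_group_add \<Rightarrow> 'v) \<Rightarrow> ('k \<Rightarrow> 'w::ab_group_add \<Rightarrow> 'w) \<Rightarrow> ('v \<Rightarrow> 'w \<Rightarrow> 'k) \<Rightarrow> bool" where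
  "bilin sV sW f \<longleftrightarrow> (\<forall>y. lin sV (*) (\<lambda>x. f x y)) \<and> (\<forall>x. lin sW (*) (f x))"

definition trilin :: "('k::field \<Rightarrow> 'u::ab_group_add \<Rightarrow> 'u) \<Rightarrow> ('k \<Rightarrow> 'v::ab_group_add \<Rightarrow> 'v) \<Rightarrow> ('k \<Rightarrow> 'w::ab_group_add \<Rightarrow> 'w) \<Rightarrow> ('u \<Rightarrow> 'v \<Rightarrow> 'w \<Rightarrow> 'k) \<Rightarrow> bool" where
  "trilin sU sV sW f \<longleftrightarrow> (\<forall>y z. lin sU (*) (\<lambda>x. f x y z)) \<and> (\<forall>x z. lin sV (*) (\<lambda>y. f x y z)) \<and> (\<forall>x y. lin sW (*) (f x y))"

definition teq2 :: "('k::field \<Rightarrow> 'v::ab_group_add \<Rightarrow> 'v) \<Rightarrow> ('k \<Rightarrow> 'w::ab_group_add \<Rightarrow> 'w) \<Rightarrow> ('v \<times> 'w) list \<Rightarrow> ('v \<times> 'w) list \<Rightarrow> bool" where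
  "teq2 sV sW xs ys \<longleftrightarrow> (\<forall>f. bilin sV sW f \<longrightarrow> (\<Sum>(x,y)\<leftarrow>xs. f x y) = (\<Sum>(x,y)\<leftarrow>ys. f x y))"

definition teq3 :: "('k::field \<Rightarrow> 'u::ab_group_add \<Rightarrow> 'u) \<Rightarrow> ('k \<Rightarrow> 'v::ab_group_add \<Rightarrow> 'v) \<Rightarrow> ('k \<Rightarrow> 'w::ab_group_add \<Rightarrow> 'w) \<Rightarrow> ('u \<times> 'v \<times> 'w) list \<Rightarrow> ('u \<times> 'v \<times> 'w) list \<Rightarrow> bool" where
  "teq3 sU sV sW xs ys \<longleftrightarrow> (\<forall>f. trilin sU sV sW f \<longrightarrow> (\<Sum>(x,y,z)\<leftarrow>xs. f x y z) = (\<Sum>(x,y,z)\<leftarrow>ys. f x y z))"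

definition teqB :: "('k::field \<Rightarrow> 'a::ring \<Rightarrow> 'a) \<Rightarrow> 'a set \<Rightarrow> ('a \<times> 'a) list \<Rightarrow> ('a \<times> 'a) list \<Rightarrow> bool" where
  "teqB sA B xs ys \<longleftrightarrow> (\<forall>f. bilin sA sA f \<and> (\<forall>b\<in>B. \<forall>x y. f (x * b) y = f x (b * y))
      \<longrightarrow> (\<Sum>(x,y)\<leftarrow>xs. f x y) = (\<Sum>(x,y)\<leftarrow>ys. f x y))"

definition tmult :: "('a::times \<times> 'b::times) list \<Rightarrow> ('a \<times> 'b) list \<Rightarrow> ('a \<times> 'b) list" where
  "tmult xs ys = [(x * x', y * y'). (x,y) \<leftarrow> xs, (x',y') \<leftarrow> ys]"

definition k_algebra :: "('k::field \<Rightarrow> 'a::ring \<Rightarrow> 'a) \<Rightarrow> bool" where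
  "k_algebra s \<longleftrightarrow> vector_space s \<and> (\<forall>c x y. s c (x * y) = s c x * y \<and> s c (x * y) = x * s c y)"

definition hopf_algebra :: "('k::field \<Rightarrow> 'h::ring_1 \<Rightarrow> 'h) \<Rightarrow> ('h \<Rightarrow> ('h \<times> 'h) list) \<Rightarrow> ('h \<Rightarrow> 'k) \<Rightarrow> ('h \<Rightarrow> 'h) \<Rightarrow> bool" where
  "hopf_algebra sH \<Delta> \<epsilon> S \<longleftrightarrow>
     k_algebra sH \<and>
     (\<forall>x y. teq2 sH sH (\<Delta> (x + y)) (\<Delta> x @ \<Delta> y)) \<and>
     (\<forall>c x. teq2 sH sH (\<Delta> (sH c x)) (map (\<lambda>(u,v). (sH c u, v)) (\<Delta> x))) \<and>
     (\<forall>x y. teq2 sH sH (\<Delta> (x * y)) (tmult (\<Delta> x) (\<Delta> y))) \<and>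
     teq2 sH sH (\<Delta> 1) [(1, 1)] \<and>
     (\<forall>x. teq3 sH sH sH [(u1, u2, v). (u,v) \<leftarrow> \<Delta> x, (u1,u2) \<leftarrow> \<Delta> u]
                          [(u, v1, v2). (u,v) \<leftarrow> \<Delta> x, (v1,v2) \<leftarrow> \<Delta> v]) \<and>
     lin sH (*) \<epsilon> \<and> (\<forall>x y. \<epsilon> (x * y) = \<epsilon> x * \<epsilon> y) \<and> \<epsilon> 1 = 1 \<and>
     (\<forall>x. (\<Sum>(u,v)\<leftarrow>\<Delta> x. sH (\<epsilon> u) v) = x) \<and>
     (\<forall>x. (\<Sum>(u,v)\<leftarrow>\<Delta> x. sH (\<epsilon> v) u) = x) \<and>
     lin sH sH S \<and>
     (\<forall>x. (\<Sum>(u,v)\<leftarrow>\<Delta> x. S u * v) = sH (\<epsilon> x) 1) \<and>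
     (\<forall>x. (\<Sum>(u,v)\<leftarrow>\<Delta> x. u * S v) = sH (\<epsilon> x) 1)"

definition left_invariant :: "('k::field \<Rightarrow> 'h::ring_1 \<Rightarrow> 'h) \<Rightarrow> ('h \<Rightarrow> ('h \<times> 'h) list) \<Rightarrow> ('h \<Rightarrow> 'k) \<Rightarrow> bool" where
  "left_invariant sH \<Delta> \<phi> \<longleftrightarrow> (\<forall>h. (\<Sum>(u,v)\<leftarrow>\<Delta> h. sH (\<phi> v) u) = sH (\<phi> h) 1)"

definition right_invariant :: "('k::field \<Rightarrow> 'h::ring_1 \<Rightarrow> 'h) \<Rightarrow> ('h \<Rightarrow> ('h \<times> 'h) list) \<Rightarrow> ('h \<Rightarrow> 'k) \<Rightarrow> bool" where
  "right_invariant sH \<Delta> \<psi> \<longleftrightarrow> (\<forall>h. (\<Sum>(u,v)\<leftarrow>\<Delta> h. sH (\<psi> u) v) = sH (\<psi> h) 1)"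

definition hopf_with_integrals :: "('k::field \<Rightarrow> 'h::ring_1 \<Rightarrow> 'h) \<Rightarrow> ('h \<Rightarrow> ('h \<times> 'h) list) \<Rightarrow> ('h \<Rightarrow> 'k) \<Rightarrow> ('h \<Rightarrow> 'h) \<Rightarrow> ('h \<Rightarrow> 'k) \<Rightarrow> bool" where
  "hopf_with_integrals sH \<Delta> \<epsilon> S \<phi> \<longleftrightarrow> hopf_algebra sH \<Delta> \<epsilon> S \<and>
     lin sH (*) \<phi> \<and> (\<exists>h. \<phi> h \<noteq> 0) \<and>
     left_invariant sH \<Delta> \<phi> \<and> right_invariant sH \<Delta> (\<phi> \<circ> S)"

definition modular_element :: "('k::field \<Rightarrow> 'h::ring_1 \<Rightarrow> 'h) \<Rightarrow> ('h \<Rightarrow> ('h \<times> 'h) list) \<Rightarrow> ('h \<Rightarrow> 'h) \<Rightarrow> ('h \<Rightarrow> 'k) \<Rightarrow> 'h \<Rightarrow> bool" where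
  "modular_element sH \<Delta> S \<phi> \<delta> \<longleftrightarrow> teq2 sH sH (\<Delta> \<delta>) [(\<delta>, \<delta>)] \<and>
     (\<exists>\<delta>'. \<delta> * \<delta>' = 1 \<and> \<delta>' * \<delta> = 1) \<and> (\<forall>h. \<phi> (S h) = \<phi> (h * \<delta>))"

definition comodule_algebra :: "('k::field \<Rightarrow> 'a::ring \<Rightarrow> 'a) \<Rightarrow> ('k \<Rightarrow> 'h::ring_1 \<Rightarrow> 'h) \<Rightarrow> ('h \<Rightarrow> ('h \<times> 'h) list) \<Rightarrow> ('h \<Rightarrow> 'k) \<Rightarrow> ('a \<Rightarrow> ('a \<times> 'h) list) \<Rightarrow> bool" where
  "comodule_algebra sA sH \<Delta> \<epsilon> \<alpha> \<longleftrightarrow> k_algebra sA \<and>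
     (\<forall>x y. teq2 sA sH (\<alpha> (x + y)) (\<alpha> x @ \<alpha> y)) \<and>
     (\<forall>c x. teq2 sA sH (\<alpha> (sA c x)) (map (\<lambda>(u,v). (sA c u, v)) (\<alpha> x))) \<and>
     (\<forall>x y. teq2 sA sH (\<alpha> (x * y)) (tmult (\<alpha> x) (\<alpha> y))) \<and>
     (\<forall>x. teq3 sA sH sH [(b, g, h). (a, h) \<leftarrow> \<alpha> x, (b, g) \<leftarrow> \<alpha> a]
                          [(a, h1, h2). (a, h) \<leftarrow> \<alpha> x, (h1, h2) \<leftarrow> \<Delta> h]) \<and>
     (\<forall>x. (\<Sum>(a,h)\<leftarrow>\<alpha> x. sA (\<epsilon> h) a) = x)"

definition coinv :: "('k::field \<Rightarrow> 'a::ring \<Rightarrow> 'a) \<Rightarrow> ('k \<Rightarrow> 'h::ring_1 \<Rightarrow> 'h) \<Rightarrow> ('a \<Rightarrow> ('a \<times> 'h) list) \<Rightarrow> 'a set" where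
  "coinv sA sH \<alpha> = {a. teq2 sA sH (\<alpha> a) [(a, 1)]}"

definition galois_map :: "('a \<Rightarrow> ('a \<times> 'h) list) \<Rightarrow> ('a::ring \<times> 'a) list \<Rightarrow> ('a \<times> 'h) list" where
  "galois_map \<alpha> xs = [(a * c, h). (a, b) \<leftarrow> xs, (c, h) \<leftarrow> \<alpha> b]"

text \<open>I-Galois object: coinvariants are \<open>k_I\<close> with minimal idempotents \<open>p i\<close> (\<open>i \<in> I\<close>),
  and the Galois map \<open>A \<otimes>_{A^\<alpha>} A \<rightarrow> A \<otimes> H\<close> is bijective.\<close>
definition I_galois_object :: "('k::field \<Rightarrow> 'a::ring \<Rightarrow> 'a) \<Rightarrow> ('k \<Rightarrow> 'h::ring_1 \<Rightarrow> 'h) \<Rightarrow> ('h \<Rightarrow> ('h \<times> 'h) list) \<Rightarrow> ('h \<Rightarrow> 'k) \<Rightarrow> ('a \<Rightarrow> ('a \<times> 'h) list) \<Rightarrow> 'i set \<Rightarrow> ('i \<Rightarrow> 'a) \<Rightarrow> bool" where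
  "I_galois_object sA sH \<Delta> \<epsilon> \<alpha> I p \<longleftrightarrow> comodule_algebra sA sH \<Delta> \<epsilon> \<alpha> \<and>
     (\<forall>i\<in>I. p i \<noteq> 0 \<and> p i \<in> coinv sA sH \<alpha>) \<and>
     (\<forall>i\<in>I. \<forall>j\<in>I. p i * p j = (if i = j then p i else 0)) \<and>
     (\<forall>b\<in>coinv sA sH \<alpha>. \<exists>F c. finite F \<and> F \<subseteq> I \<and> b = (\<Sum>i\<in>F. sA (c i) (p i))) \<and>
     (\<forall>xs ys. teq2 sA sH (galois_map \<alpha> xs) (galois_map \<alpha> ys) \<longrightarrow> teqB sA (coinv sA sH \<alpha>) xs ys) \<and>
     (\<forall>zs. \<exists>xs. teq2 sA sH (galois_map \<alpha> xs) zs)"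

definition Phi_map :: "('k::field \<Rightarrow> 'a::ring \<Rightarrow> 'a) \<Rightarrow> ('a \<Rightarrow> ('a \<times> 'h) list) \<Rightarrow> ('h \<Rightarrow> 'k) \<Rightarrow> 'a \<Rightarrow> 'a" where
  "Phi_map sA \<alpha> \<phi> a = (\<Sum>(x,h)\<leftarrow>\<alpha> a. sA (\<phi> h) x)"

definition scrS :: "('k::field \<Rightarrow> 'a::ring \<Rightarrow> 'a) \<Rightarrow> 'i set \<Rightarrow> ('i \<Rightarrow> 'a) \<Rightarrow> 'a \<Rightarrow> 'k" where
  "scrS sA I p b = (THE s. \<exists>F c. finite F \<and> F \<subseteq> I \<and> b = (\<Sum>i\<in>F. sA (c i) (p i)) \<and> s = sum c F)"

definition phi_A :: "('k::field \<Rightarrow> 'a::ring \<Rightarrow> 'a) \<Rightarrow> ('a \<Rightarrow> ('a \<times> 'h) list) \<Rightarrow> ('h \<Rightarrow> 'k) \<Rightarrow> 'i set \<Rightarrow> ('i \<Rightarrow> 'a) \<Rightarrow> 'a \<Rightarrow> 'k" where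
  "phi_A sA \<alpha> \<phi> I p a = scrS sA I p (Phi_map sA \<alpha> \<phi> a)"

end

theory Submission
  imports Defs
begin

(*
  The invariant functional \<phi> on H is faithful: \<phi>(a w) = 0 for all a forces w = 0, and likewise
  on the other side.  This comes from the strong invariance identity
  S((id \<otimes> \<phi>)(\<Delta>(a)(1 \<otimes> b))) = (id \<otimes> \<phi>)((1 \<otimes> a)\<Delta>(b)): after expanding the first legs of
  \<Delta>(w) in a basis, the second legs are again annihilated by \<phi>, and the antipode and counit
  axioms then kill w.  The same identity shows that S is surjective.

  \<phi>_A is \<S> composed with \<Phi> = (id \<otimes> \<phi>)\<alpha>, a bimodule map over A^\<alpha> = k_I.  If \<phi>_A(a A) = 0,
  then \<Phi>(a A) = 0.  Writing z \<otimes> h as a Galois image \<Sigma> (x \<otimes> 1)\<alpha>(y) turns this into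
  (id \<otimes> \<phi>)(\<alpha>(a z)(1 \<otimes> S h)) = 0 for all h, so a z = 0 by faithfulness of \<phi> and surjectivity
  of S, and a = 0 because the finite sums of the p_i are local units.  On the other side,
  \<phi>_A(A a) = 0 gives (x \<otimes> 1)\<alpha>(a) = 0 for every x by faithfulness of \<phi>, and a second Galois-map
  argument yields the same vanishing slices (id \<otimes> \<phi>)(\<alpha>(a)(1 \<otimes> S h)).

  \<delta>-invariance follows from coassociativity of \<alpha> and (\<phi> \<otimes> id)\<Delta>(h) = \<phi>(h)\<delta>, which in turn
  comes from right invariance of \<phi> \<circ> S and \<phi>(S h) = \<phi>(h \<delta>).
*)

section \<open>Linear functionals\<close>

lemma lin_add: "lin sV sW f \<Longrightarrow> f (x + y) = f x + f y"
  unfolding lin_def by blast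

lemma lin_scale: "lin sV sW f \<Longrightarrow> f (sV c x) = sW c (f x)"
  unfolding lin_def by blast

lemma lin_zero: "lin sV sW f \<Longrightarrow> f 0 = 0"
  using lin_add[of sV sW f 0 0] by simp

lemma lin_diff: "lin sV sW f \<Longrightarrow> f (x - y) = f x - f y"
  by (metis add_diff_cancel diff_add_cancel lin_add)

lemma lin_sum_list: "lin sV sW f \<Longrightarrow> f (\<Sum>(u,v)\<leftarrow>xs. g u v) = (\<Sum>(u,v)\<leftarrow>xs. f (g u v))"
  by (induction xs) (auto simp: lin_zero lin_add)

lemma lin_sum: "lin sV sW f \<Longrightarrow> f (sum g A) = (\<Sum>x\<in>A. f (g x))"
  by (induction A rule: infinite_finite_induct) (auto simp: lin_zero lin_add)

lemma lin_comp: "lin s1 s2 f \<Longrightarrow> lin s2 s3 g \<Longrightarrow> lin s1 s3 (\<lambda>x. g (f x))"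
  unfolding lin_def by auto

lemma lin_scale_self:
  assumes "vector_space s" shows "lin s s (s c)"
proof -
  interpret vector_space s by fact
  show ?thesis unfolding lin_def by (simp add: scale_right_distrib mult.commute)
qed

lemma vector_space_field: "vector_space ((*) :: 'k::field \<Rightarrow> 'k \<Rightarrow> 'k)"
  by unfold_locales (auto simp: algebra_simps)

lemma lin_iff_linear:
  assumes "vector_space s1" "vector_space s2"
  shows "lin s1 s2 f \<longleftrightarrow> Vector_Spaces.linear s1 s2 f"
  using assms unfolding lin_def by (auto simp: Vector_Spaces.linear_iff)

lemma lin_functional_extend:
  fixes s :: "'k::field \<Rightarrow> 'v::ab_group_add \<Rightarrow> 'v"
  assumes "vector_space s" "module.independent s B"
  obtains g where "lin s (*) g" "\<And>b. b \<in> B \<Longrightarrow> g b = f b"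
proof -
  interpret vector_space_pair s "(*) :: 'k \<Rightarrow> 'k \<Rightarrow> 'k"
    using assms(1) vector_space_field by (simp add: vector_space_pair_def)
  from linear_independent_extend[OF assms(2)] obtain g
    where "Vector_Spaces.linear s (*) g" "\<forall>b\<in>B. g b = f b" by blast
  with that lin_iff_linear[OF assms(1) vector_space_field] show ?thesis by blast
qed

lemma eq_if_functionals_agree:
  fixes s :: "'k::field \<Rightarrow> 'v::ab_group_add \<Rightarrow> 'v"
  assumes vs: "vector_space s" and agree: "\<And>l. lin s (*) l \<Longrightarrow> l x = l y"
  shows "x = y"
proof (rule ccontr)
  assume "x \<noteq> y"
  interpret vector_space s by (rule vs)
  from \<open>x \<noteq> y\<close> have "independent {x - y}" by simp
  then obtain g where g: "lin s (*) g" "g (x - y) = 1"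
    by (rule lin_functional_extend[OF vs, where f = "\<lambda>_. 1"]) simp
  then have "g x - g y = 1" by (simp add: lin_diff[OF g(1)])
  with agree[OF g(1)] show False by simp
qed

lemma in_span_if_annihilated:
  fixes s :: "'k::field \<Rightarrow> 'v::ab_group_add \<Rightarrow> 'v"
  assumes vs: "vector_space s"
    and annihilated: "\<And>g. lin s (*) g \<Longrightarrow> (\<And>x. x \<in> X \<Longrightarrow> g x = 0) \<Longrightarrow> g c = 0"
  shows "c \<in> module.span s X"
proof (rule ccontr)
  interpret V: vector_space s by (rule vs)
  assume c: "c \<notin> V.span X"
  obtain B where B: "B \<subseteq> X" "V.independent B" "X \<subseteq> V.span B"
    using V.maximal_independent_subset by blast
  have cB: "c \<notin> V.span B" using c B(1) V.span_mono by blast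
  obtain g where g: "lin s (*) g" "\<And>x. x \<in> insert c B \<Longrightarrow> g x = (if x = c then 1 else 0)"
    by (rule lin_functional_extend[OF vs V.independent_insertI[OF cB B(2)],
          where f = "\<lambda>x. if x = c then 1 else 0"]) (rule that)
  interpret vector_space_pair s "(*) :: 'k \<Rightarrow> 'k \<Rightarrow> 'k"
    using vs vector_space_field by (simp add: vector_space_pair_def)
  have "g b = 0" if "b \<in> B" for b
    using g(2)[of b] that cB V.span_base by auto
  then have "g x = 0" if "x \<in> X" for x
    using linear_eq_0_on_span[of g B] g(1) lin_iff_linear[OF vs vector_space_field] B(3) that by blast
  with annihilated[OF g(1)] g(2)[of c] show False by simp
qed

lemma finite_coordinates:
  fixes s :: "'k::field \<Rightarrow> 'v::ab_group_add \<Rightarrow> 'v"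
  assumes vs: "vector_space s" and "finite X"
  obtains E lam where "finite E" "\<And>e. lin s (*) (lam e)"
    "\<And>u. u \<in> X \<Longrightarrow> u = (\<Sum>e\<in>E. s (lam e u) e)"
proof -
  interpret V: vector_space s by (rule vs)
  obtain B where B: "B \<subseteq> X" "V.independent B" "X \<subseteq> V.span B"
    using V.maximal_independent_subset by blast
  have finB: "finite B" using B(1) \<open>finite X\<close> finite_subset by blast
  have "\<forall>e. \<exists>g. lin s (*) g \<and> (\<forall>b\<in>B. g b = (if b = e then 1 else 0))"
  proof
    fix e
    obtain g where "lin s (*) g" "\<And>b. b \<in> B \<Longrightarrow> g b = (if b = e then 1 else 0)"
      using lin_functional_extend[OF vs B(2), where f = "\<lambda>b. if b = e then 1 else 0"] by blast
    then show "\<exists>g. lin s (*) g \<and> (\<forall>b\<in>B. g b = (if b = e then 1 else 0))" by blast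
  qed
  then obtain lam where lam: "\<And>e. lin s (*) (lam e)"
    "\<And>e b. b \<in> B \<Longrightarrow> lam e b = (if b = e then 1 else 0)"
    by (metis (no_types, lifting) choice)
  have "u = (\<Sum>e\<in>B. s (lam e u) e)" if "u \<in> X" for u
  proof -
    obtain c where c: "(\<Sum>v\<in>B. s (c v) v) = u"
      using \<open>u \<in> X\<close> B(3) V.span_finite[OF finB] by auto
    have "lam e u = c e" if "e \<in> B" for e
    proof -
      have "lam e u = (\<Sum>v\<in>B. c v * lam e v)"
        unfolding c[symmetric] by (simp add: lin_sum[OF lam(1)] lin_scale[OF lam(1)])
      also have "\<dots> = (\<Sum>v\<in>B. if v = e then c v else 0)"
        by (rule sum.cong) (auto simp: lam(2))
      also have "\<dots> = c e" using that finB by simp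
      finally show ?thesis .
    qed
    then have "(\<Sum>e\<in>B. s (lam e u) e) = (\<Sum>e\<in>B. s (c e) e)" by (intro sum.cong) auto
    then show ?thesis using c by simp
  qed
  with finB lam(1) that show ?thesis by blast
qed

section \<open>Formal tensors\<close>

definition bilinear_map where
  "bilinear_map sV sW sU F \<longleftrightarrow> (\<forall>v. lin sV sU (\<lambda>u. F u v)) \<and> (\<forall>u. lin sW sU (F u))"

definition trilinear_map where
  "trilinear_map sU sV sW sX F \<longleftrightarrow> (\<forall>v w. lin sU sX (\<lambda>u. F u v w)) \<and> (\<forall>u w. lin sV sX (\<lambda>v. F u v w))
     \<and> (\<forall>u v. lin sW sX (F u v))"

lemma bilinear_mapI:
  assumes "\<And>x y v. F (x + y) v = F x v + F y v" "\<And>c x v. F (sV c x) v = sU c (F x v)"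
    "\<And>u x y. F u (x + y) = F u x + F u y" "\<And>c u x. F u (sW c x) = sU c (F u x)"
  shows "bilinear_map sV sW sU F"
  using assms unfolding bilinear_map_def lin_def by auto

lemma trilinear_mapI:
  assumes "\<And>x y v w. F (x + y) v w = F x v w + F y v w" "\<And>c x v w. F (sU c x) v w = sX c (F x v w)"
    "\<And>u x y w. F u (x + y) w = F u x w + F u y w" "\<And>c u x w. F u (sV c x) w = sX c (F u x w)"
    "\<And>u v x y. F u v (x + y) = F u v x + F u v y" "\<And>c u v x. F u v (sW c x) = sX c (F u v x)"
  shows "trilinear_map sU sV sW sX F"
  using assms unfolding trilinear_map_def lin_def by auto

lemma bilinear_map_bilin: "bilin sV sW f \<longleftrightarrow> bilinear_map sV sW (*) f"
  unfolding bilin_def bilinear_map_def ..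

lemma bilinear_map_swap: "bilinear_map sV sW sU F \<Longrightarrow> bilinear_map sW sV sU (\<lambda>v u. F u v)"
  unfolding bilinear_map_def by simp

lemma bilinear_map_comp:
  "bilinear_map sV sW sU F \<Longrightarrow> lin sU sX l \<Longrightarrow> bilinear_map sV sW sX (\<lambda>u v. l (F u v))"
  unfolding bilinear_map_def by (auto intro: lin_comp)

lemma trilinear_map_comp:
  assumes "trilinear_map sU sV sW sX F" "lin sX sY l"
  shows "trilinear_map sU sV sW sY (\<lambda>u v w. l (F u v w))"
  unfolding trilinear_map_def
proof (intro conjI allI)
  fix u v w
  have "lin sU sX (\<lambda>u. F u v w)" "lin sV sX (\<lambda>v. F u v w)" "lin sW sX (F u v)"
    using assms(1) unfolding trilinear_map_def by blast+
  then show "lin sU sY (\<lambda>u. l (F u v w))" "lin sV sY (\<lambda>v. l (F u v w))" "lin sW sY (\<lambda>w. l (F u v w))"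
    using lin_comp[OF _ assms(2)] by blast+
qed

text \<open>\<open>teq2\<close> is defined by scalar bilinear forms; composing with functionals extends it to
  vector-valued ones.\<close>

lemma teq2_sum_eq:
  assumes "teq2 sV sW xs ys" "vector_space sU" "bilinear_map sV sW sU F"
  shows "(\<Sum>(u,v)\<leftarrow>xs. F u v) = (\<Sum>(u,v)\<leftarrow>ys. F u v)"
proof (rule eq_if_functionals_agree[OF assms(2)])
  fix l assume l: "lin sU (*) l"
  have "bilin sV sW (\<lambda>u v. l (F u v))"
    using bilinear_map_comp[OF assms(3) l] by (simp add: bilinear_map_bilin)
  then show "l (\<Sum>(u,v)\<leftarrow>xs. F u v) = l (\<Sum>(u,v)\<leftarrow>ys. F u v)"
    using assms(1) unfolding teq2_def lin_sum_list[OF l] by blast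
qed

lemma teq3_sum_eq:
  assumes "teq3 sU sV sW xs ys" "vector_space sX" "trilinear_map sU sV sW sX F"
  shows "(\<Sum>(u,v,w)\<leftarrow>xs. F u v w) = (\<Sum>(u,v,w)\<leftarrow>ys. F u v w)"
proof (rule eq_if_functionals_agree[OF assms(2)])
  fix l assume l: "lin sX (*) l"
  have sum: "l (\<Sum>(u,v,w)\<leftarrow>zs. F u v w) = (\<Sum>(u,v,w)\<leftarrow>zs. l (F u v w))" for zs
    by (induction zs) (auto simp: lin_zero[OF l] lin_add[OF l])
  have "trilin sU sV sW (\<lambda>u v w. l (F u v w))"
    using trilinear_map_comp[OF assms(3) l] unfolding trilinear_map_def trilin_def .
  then show "l (\<Sum>(u,v,w)\<leftarrow>xs. F u v w) = l (\<Sum>(u,v,w)\<leftarrow>ys. F u v w)"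
    using assms(1) unfolding teq3_def sum by blast
qed

lemma sum_list_concat_pairs:
  "(\<Sum>(u,v)\<leftarrow>concat (map g xs). f u v) = (\<Sum>x\<leftarrow>xs. \<Sum>(u,v)\<leftarrow>g x. f u v)"
  by (induction xs) auto

lemma sum_list_concat_triples:
  "(\<Sum>(u,v,w)\<leftarrow>concat (map g xs). f u v w) = (\<Sum>x\<leftarrow>xs. \<Sum>(u,v,w)\<leftarrow>g x. f u v w)"
  by (induction xs) auto

lemma sum_list_galois_map:
  "(\<Sum>(u,v)\<leftarrow>galois_map \<alpha> xs. f u v) = (\<Sum>(a,b)\<leftarrow>xs. \<Sum>(c,h)\<leftarrow>\<alpha> b. f (a * c) h)"
  unfolding galois_map_def
  by (induction xs) (auto simp: sum_list_concat_pairs case_prod_beta o_def)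

lemma sum_list_tmult:
  "(\<Sum>(u,v)\<leftarrow>tmult xs ys. f u v) = (\<Sum>(a,b)\<leftarrow>xs. \<Sum>(c,h)\<leftarrow>ys. f (a * c) (b * h))"
  unfolding tmult_def
  by (induction xs) (auto simp: sum_list_concat_pairs case_prod_beta o_def)

lemma sum_list_iterate_first:
  "(\<Sum>(u,v,w)\<leftarrow>[(b, g, h). (a, h) \<leftarrow> xs, (b, g) \<leftarrow> \<beta> a]. f u v w)
   = (\<Sum>(a,h)\<leftarrow>xs. \<Sum>(b,g)\<leftarrow>\<beta> a. f b g h)"
  by (induction xs) (auto simp: sum_list_concat_triples case_prod_beta o_def)

lemma sum_list_iterate_second:
  "(\<Sum>(u,v,w)\<leftarrow>[(a, h1, h2). (a, h) \<leftarrow> xs, (h1, h2) \<leftarrow> \<beta> h]. f u v w)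
   = (\<Sum>(a,h)\<leftarrow>xs. \<Sum>(h1,h2)\<leftarrow>\<beta> h. f a h1 h2)"
  by (induction xs) (auto simp: sum_list_concat_triples case_prod_beta o_def)

lemma sum_list_map_fst:
  "(\<Sum>(u,v)\<leftarrow>map (\<lambda>(u,v). (m u, v)) xs. f u v) = (\<Sum>(u,v)\<leftarrow>xs. f (m u) v)"
  by (induction xs) auto

lemma sum_list_pairs_commute:
  "(\<Sum>(u,v)\<leftarrow>L. \<Sum>(x,y)\<leftarrow>M. f u v x y) = (\<Sum>(x,y)\<leftarrow>M. \<Sum>(u,v)\<leftarrow>L. (f u v x y :: 'a::comm_monoid_add))"
proof (induction L)
  case (Cons a L)
  then show ?case by (cases a) (simp add: sum_list_addf case_prod_beta)
qed (simp add: sum_list_0 case_prod_beta)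

lemma sum_list_sum_commute:
  "(\<Sum>(u,v)\<leftarrow>L. \<Sum>e\<in>E. g e u v) = (\<Sum>e\<in>E. \<Sum>(u,v)\<leftarrow>L. (g e u v :: 'a::comm_monoid_add))"
proof (induction L)
  case (Cons a L)
  then show ?case by (cases a) (simp add: sum.distrib)
qed simp

lemma sum_list_add_pairs:
  "(\<Sum>(u,v)\<leftarrow>L. f u v + g u v) = (\<Sum>(u,v)\<leftarrow>L. f u v) + (\<Sum>(u,v)\<leftarrow>L. (g u v :: 'a::comm_monoid_add))"
  by (induction L) (auto simp: algebra_simps)

lemma sum_list_zero_pairs[simp]: "(\<Sum>(u,v)\<leftarrow>L. (0::'a::monoid_add)) = 0"
  by (induction L) auto

lemma sum_list_map_swap: "(\<Sum>(u,v)\<leftarrow>map prod.swap L. f u v) = (\<Sum>(u,v)\<leftarrow>L. (f v u :: 'a::monoid_add))"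
  by (induction L) auto

lemma sum_list_cong_pairs:
  "(\<And>u v. (u,v) \<in> set L \<Longrightarrow> f u v = g u v) \<Longrightarrow> (\<Sum>(u,v)\<leftarrow>L. f u v) = (\<Sum>(u,v)\<leftarrow>L. g u v)"
  by (rule arg_cong[where f=sum_list], rule map_cong[OF refl]) auto

lemma sum_list_pairs_mult_right:
  "(\<Sum>(u,v)\<leftarrow>L. f u v) * (y::'a::ring) = (\<Sum>(u,v)\<leftarrow>L. f u v * y)"
  by (induction L) (auto simp: distrib_right)

lemma sum_list_pairs_mult_left:
  "(y::'a::ring) * (\<Sum>(u,v)\<leftarrow>L. f u v) = (\<Sum>(u,v)\<leftarrow>L. y * f u v)"
  by (induction L) (auto simp: distrib_left)

lemma scale_sum_list_pairs:
  assumes "vector_space s" shows "s c (\<Sum>(u,v)\<leftarrow>L. f u v) = (\<Sum>(u,v)\<leftarrow>L. s c (f u v))"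
  using lin_sum_list[OF lin_scale_self[OF assms]] .

lemma sum_list_pairs_scale:
  assumes "vector_space s" shows "s (\<Sum>(u,v)\<leftarrow>L. f u v) x = (\<Sum>(u,v)\<leftarrow>L. s (f u v) x)"
proof -
  interpret vector_space s by fact
  show ?thesis by (induction L) (auto simp: scale_left_distrib)
qed

lemma lin_slice_swap:
  assumes "lin sV (*) l" "lin sW (*) \<theta>"
  shows "\<theta> (\<Sum>(u,v)\<leftarrow>L. sW (l u) v) = l (\<Sum>(u,v)\<leftarrow>L. sV (\<theta> v) u)"
  by (simp add: lin_sum_list[OF assms(1)] lin_sum_list[OF assms(2)] lin_scale[OF assms(1)]
      lin_scale[OF assms(2)] mult.commute)

lemma sum_expand_first_leg:
  assumes F: "bilinear_map sV sW sU F"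
    and rep: "\<And>u v. (u,v) \<in> set L \<Longrightarrow> u = (\<Sum>e\<in>E. sV (lam e u) e)"
  shows "(\<Sum>(u,v)\<leftarrow>L. F u v) = (\<Sum>e\<in>E. F e (\<Sum>(u,v)\<leftarrow>L. sW (lam e u) v))"
proof -
  have l1: "lin sV sU (\<lambda>u. F u v)" and l2: "lin sW sU (F u)" for u v
    using F unfolding bilinear_map_def by blast+
  have "(\<Sum>(u,v)\<leftarrow>L. F u v) = (\<Sum>(u,v)\<leftarrow>L. \<Sum>e\<in>E. F e (sW (lam e u) v))"
  proof (rule sum_list_cong_pairs)
    fix u v assume "(u,v) \<in> set L"
    then have "F u v = F (\<Sum>e\<in>E. sV (lam e u) e) v" using rep by metis
    then show "F u v = (\<Sum>e\<in>E. F e (sW (lam e u) v))"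
      by (simp add: lin_sum[OF l1] lin_scale[OF l1] lin_scale[OF l2])
  qed
  also have "\<dots> = (\<Sum>e\<in>E. F e (\<Sum>(u,v)\<leftarrow>L. sW (lam e u) v))"
    by (simp add: sum_list_sum_commute lin_sum_list[OF l2])
  finally show ?thesis .
qed

lemma sum_expand_second_leg:
  assumes F: "bilinear_map sV sW sU F"
    and rep: "\<And>u v. (u,v) \<in> set L \<Longrightarrow> v = (\<Sum>e\<in>E. sW (lam e v) e)"
  shows "(\<Sum>(u,v)\<leftarrow>L. F u v) = (\<Sum>e\<in>E. F (\<Sum>(u,v)\<leftarrow>L. sV (lam e v) u) e)"
proof -
  have "(\<Sum>(u,v)\<leftarrow>map prod.swap L. F v u) = (\<Sum>e\<in>E. F (\<Sum>(u,v)\<leftarrow>map prod.swap L. sV (lam e u) v) e)"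
    by (rule sum_expand_first_leg[OF bilinear_map_swap[OF F]]) (use rep in auto)
  then show ?thesis by (simp only: sum_list_map_swap)
qed

lemma sum_eq_0_if_slices_vanish:
  fixes sV :: "'k::field \<Rightarrow> 'v::ab_group_add \<Rightarrow> 'v"
  assumes vs: "vector_space sV" and F: "bilinear_map sV sW sU F"
    and lin: "\<And>\<theta>. \<theta> \<in> \<Theta> \<Longrightarrow> lin sW (*) \<theta>"
    and sep: "\<And>w. (\<And>\<theta>. \<theta> \<in> \<Theta> \<Longrightarrow> \<theta> w = 0) \<Longrightarrow> w = 0"
    and vanish: "\<And>\<theta>. \<theta> \<in> \<Theta> \<Longrightarrow> (\<Sum>(u,v)\<leftarrow>L. sV (\<theta> v) u) = 0"
  shows "(\<Sum>(u,v)\<leftarrow>L. F u v) = 0"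
proof -
  obtain E lam where E: "\<And>e. lin sV (*) (lam e)" "\<And>u. u \<in> fst ` set L \<Longrightarrow> u = (\<Sum>e\<in>E. sV (lam e u) e)"
    by (rule finite_coordinates[OF vs, of "fst ` set L"]) auto
  have legs: "(\<Sum>(u,v)\<leftarrow>L. sW (lam e u) v) = 0" for e
  proof (rule sep)
    fix \<theta> assume "\<theta> \<in> \<Theta>"
    then show "\<theta> (\<Sum>(u,v)\<leftarrow>L. sW (lam e u) v) = 0"
      by (simp add: lin_slice_swap[OF E(1) lin] vanish lin_zero[OF E(1)])
  qed
  have "(\<Sum>(u,v)\<leftarrow>L. F u v) = (\<Sum>e\<in>E. F e (\<Sum>(u,v)\<leftarrow>L. sW (lam e u) v))"
  proof (rule sum_expand_first_leg[OF F])
    fix u v assume "(u, v) \<in> set L"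
    then show "u = (\<Sum>e\<in>E. sV (lam e u) e)" by (intro E(2)) force
  qed
  also have "\<dots> = 0"
    using F lin_zero unfolding legs bilinear_map_def by (metis sum.neutral)
  finally show ?thesis .
qed

section \<open>Hopf algebras with a modular invariant functional\<close>

locale hopf_modular =
  fixes sH :: "'k::field \<Rightarrow> 'h::ring_1 \<Rightarrow> 'h" and \<Delta> :: "'h \<Rightarrow> ('h \<times> 'h) list"
    and \<epsilon> :: "'h \<Rightarrow> 'k" and S :: "'h \<Rightarrow> 'h" and \<phi> :: "'h \<Rightarrow> 'k" and \<delta> :: 'h
  assumes integrals: "hopf_with_integrals sH \<Delta> \<epsilon> S \<phi>"
    and modular: "modular_element sH \<Delta> S \<phi> \<delta>"
begin

lemma hopf: "hopf_algebra sH \<Delta> \<epsilon> S"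
  using integrals unfolding hopf_with_integrals_def by blast

lemma k_algebra_H: "k_algebra sH"
  using hopf unfolding hopf_algebra_def by blast

lemma vector_space_H: "vector_space sH"
  using k_algebra_H unfolding k_algebra_def by blast

sublocale H: vector_space sH by (rule vector_space_H)

lemma scale_mult_left[simp]: "sH c x * y = sH c (x * y)"
  and scale_mult_right[simp]: "x * sH c y = sH c (x * y)"
  using k_algebra_H unfolding k_algebra_def by metis+

lemma Delta_mult: "teq2 sH sH (\<Delta> (x * y)) (tmult (\<Delta> x) (\<Delta> y))"
  and Delta_one: "teq2 sH sH (\<Delta> 1) [(1, 1)]"
  and Delta_coassoc: "teq3 sH sH sH [(u1, u2, v). (u,v) \<leftarrow> \<Delta> x, (u1,u2) \<leftarrow> \<Delta> u]
                          [(u, v1, v2). (u,v) \<leftarrow> \<Delta> x, (v1,v2) \<leftarrow> \<Delta> v]"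
  and eps_lin: "lin sH (*) \<epsilon>"
  and counit_left: "(\<Sum>(u,v)\<leftarrow>\<Delta> x. sH (\<epsilon> u) v) = x"
  and counit_right: "(\<Sum>(u,v)\<leftarrow>\<Delta> x. sH (\<epsilon> v) u) = x"
  and S_lin: "lin sH sH S"
  and antipode_left: "(\<Sum>(u,v)\<leftarrow>\<Delta> x. S u * v) = sH (\<epsilon> x) 1"
  and antipode_right: "(\<Sum>(u,v)\<leftarrow>\<Delta> x. u * S v) = sH (\<epsilon> x) 1"
  using hopf unfolding hopf_algebra_def by blast+

lemma phi_lin: "lin sH (*) \<phi>"
  and phi_nonzero: "\<exists>h. \<phi> h \<noteq> 0"
  and phi_left_invariant: "(\<Sum>(u,v)\<leftarrow>\<Delta> h. sH (\<phi> v) u) = sH (\<phi> h) 1"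
  and phi_S_right_invariant: "(\<Sum>(u,v)\<leftarrow>\<Delta> h. sH (\<phi> (S u)) v) = sH (\<phi> (S h)) 1"
  using integrals
  unfolding hopf_with_integrals_def left_invariant_def right_invariant_def by auto

lemma Delta_delta: "teq2 sH sH (\<Delta> \<delta>) [(\<delta>, \<delta>)]"
  and delta_invertible: "\<exists>\<delta>'. \<delta> * \<delta>' = 1 \<and> \<delta>' * \<delta> = 1"
  and phi_S: "\<phi> (S h) = \<phi> (h * \<delta>)"
  using modular unfolding modular_element_def by blast+

lemmas phi_add[simp] = lin_add[OF phi_lin]
  and phi_scale[simp] = lin_scale[OF phi_lin]
  and phi_zero[simp] = lin_zero[OF phi_lin]
  and phi_sum_list = lin_sum_list[OF phi_lin]
  and phi_sum = lin_sum[OF phi_lin]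

lemmas eps_add[simp] = lin_add[OF eps_lin]
  and eps_scale[simp] = lin_scale[OF eps_lin]
  and eps_zero[simp] = lin_zero[OF eps_lin]

lemmas S_add[simp] = lin_add[OF S_lin]
  and S_scale[simp] = lin_scale[OF S_lin]
  and S_zero[simp] = lin_zero[OF S_lin]
  and S_sum_list = lin_sum_list[OF S_lin]

lemmas scale_sum_list_H = scale_sum_list_pairs[OF vector_space_H]
lemmas sum_list_scale_H = sum_list_pairs_scale[OF vector_space_H]

lemmas hsimps = H.scale_right_distrib H.scale_left_distrib algebra_simps

lemma Delta_mult_sum:
  assumes "vector_space sU" "bilinear_map sH sH sU F"
  shows "(\<Sum>(u,v)\<leftarrow>\<Delta> (x * y). F u v) = (\<Sum>(a,b)\<leftarrow>\<Delta> x. \<Sum>(c,d)\<leftarrow>\<Delta> y. F (a * c) (b * d))"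
  using teq2_sum_eq[OF Delta_mult assms] by (simp add: sum_list_tmult)

lemma Delta_coassoc_sum:
  assumes "vector_space sX" "trilinear_map sH sH sH sX F"
  shows "(\<Sum>(u,v)\<leftarrow>\<Delta> x. \<Sum>(u1,u2)\<leftarrow>\<Delta> u. F u1 u2 v) = (\<Sum>(u,v)\<leftarrow>\<Delta> x. \<Sum>(v1,v2)\<leftarrow>\<Delta> v. F u v1 v2)"
  using teq3_sum_eq[OF Delta_coassoc assms] unfolding sum_list_iterate_first sum_list_iterate_second .

lemma strong_left_invariance:
  "(\<Sum>(a1,a2)\<leftarrow>\<Delta> a. sH (\<phi> (a2 * b)) (S a1)) = (\<Sum>(b1,b2)\<leftarrow>\<Delta> b. sH (\<phi> (a * b2)) b1)"
proof -
  define F where "F u1 u2 v = (\<Sum>(b1,b2)\<leftarrow>\<Delta> b. sH (\<phi> (v * b2)) (S u1 * (u2 * b1)))" for u1 u2 v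
  have F: "trilinear_map sH sH sH sH F"
    by (rule trilinear_mapI) (simp_all add: F_def hsimps sum_list_add_pairs scale_sum_list_H)
  have slice: "bilinear_map sH sH sH (\<lambda>u v. sH (\<phi> v) u)"
    by (rule bilinear_mapI) (simp_all add: hsimps)
  have "(\<Sum>(a1,a2)\<leftarrow>\<Delta> a. sH (\<phi> (a2 * b)) (S a1))
      = (\<Sum>(a1,a2)\<leftarrow>\<Delta> a. S a1 * (\<Sum>(u,v)\<leftarrow>\<Delta> (a2 * b). sH (\<phi> v) u))"
    by (simp add: phi_left_invariant)
  also have "\<dots> = (\<Sum>(a1,a2)\<leftarrow>\<Delta> a. \<Sum>(x,y)\<leftarrow>\<Delta> a2. F a1 x y)"
    by (simp add: Delta_mult_sum[OF vector_space_H slice] sum_list_pairs_mult_left F_def)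
  also have "\<dots> = (\<Sum>(u,v)\<leftarrow>\<Delta> a. \<Sum>(u1,u2)\<leftarrow>\<Delta> u. F u1 u2 v)"
    by (rule Delta_coassoc_sum[OF vector_space_H F, symmetric])
  also have "\<dots> = (\<Sum>(u,v)\<leftarrow>\<Delta> a. \<Sum>(b1,b2)\<leftarrow>\<Delta> b. sH (\<phi> (v * b2)) (sH (\<epsilon> u) b1))"
  proof (rule sum_list_cong_pairs)
    fix u v
    have "(\<Sum>(u1,u2)\<leftarrow>\<Delta> u. F u1 u2 v)
        = (\<Sum>(b1,b2)\<leftarrow>\<Delta> b. sH (\<phi> (v * b2)) ((\<Sum>(u1,u2)\<leftarrow>\<Delta> u. S u1 * u2) * b1))"
      unfolding F_def
      by (subst sum_list_pairs_commute) (simp add: sum_list_pairs_mult_right scale_sum_list_H mult.assoc)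
    then show "(\<Sum>(u1,u2)\<leftarrow>\<Delta> u. F u1 u2 v) = (\<Sum>(b1,b2)\<leftarrow>\<Delta> b. sH (\<phi> (v * b2)) (sH (\<epsilon> u) b1))"
      by (simp add: antipode_left)
  qed
  also have "\<dots> = (\<Sum>(b1,b2)\<leftarrow>\<Delta> b. sH (\<phi> ((\<Sum>(u,v)\<leftarrow>\<Delta> a. sH (\<epsilon> u) v) * b2)) b1)"
    by (subst sum_list_pairs_commute)
      (simp add: sum_list_pairs_mult_right phi_sum_list sum_list_scale_H mult.commute)
  finally show ?thesis by (simp add: counit_left)
qed

lemma strong_right_invariance:
  "(\<Sum>(x1,x2)\<leftarrow>\<Delta> x. sH (\<phi> (S (b * x1))) (S x2)) = (\<Sum>(b1,b2)\<leftarrow>\<Delta> b. sH (\<phi> (S (b1 * x))) b2)"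
proof -
  define G where "G y z w = (\<Sum>(b1,b2)\<leftarrow>\<Delta> b. sH (\<phi> (S (b1 * y))) (b2 * z * S w))" for y z w
  have G: "trilinear_map sH sH sH sH G"
    by (rule trilinear_mapI) (simp_all add: G_def hsimps sum_list_add_pairs scale_sum_list_H)
  have slice: "bilinear_map sH sH sH (\<lambda>u v. sH (\<phi> (S u)) v)"
    by (rule bilinear_mapI) (simp_all add: hsimps)
  have "(\<Sum>(x1,x2)\<leftarrow>\<Delta> x. sH (\<phi> (S (b * x1))) (S x2))
      = (\<Sum>(x1,x2)\<leftarrow>\<Delta> x. (\<Sum>(u,v)\<leftarrow>\<Delta> (b * x1). sH (\<phi> (S u)) v) * S x2)"
    by (simp add: phi_S_right_invariant)
  also have "\<dots> = (\<Sum>(x1,x2)\<leftarrow>\<Delta> x. \<Sum>(y,z)\<leftarrow>\<Delta> x1. G y z x2)"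
    unfolding G_def
    by (simp add: Delta_mult_sum[OF vector_space_H slice] sum_list_pairs_mult_right)
      (subst sum_list_pairs_commute, rule refl)
  also have "\<dots> = (\<Sum>(u,v)\<leftarrow>\<Delta> x. \<Sum>(v1,v2)\<leftarrow>\<Delta> v. G u v1 v2)"
    by (rule Delta_coassoc_sum[OF vector_space_H G])
  also have "\<dots> = (\<Sum>(u,v)\<leftarrow>\<Delta> x. \<Sum>(b1,b2)\<leftarrow>\<Delta> b. sH (\<phi> (S (b1 * u))) (sH (\<epsilon> v) b2))"
  proof (rule sum_list_cong_pairs)
    fix u v
    have "(\<Sum>(v1,v2)\<leftarrow>\<Delta> v. G u v1 v2)
        = (\<Sum>(b1,b2)\<leftarrow>\<Delta> b. sH (\<phi> (S (b1 * u))) (b2 * (\<Sum>(v1,v2)\<leftarrow>\<Delta> v. v1 * S v2)))"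
      unfolding G_def
      by (subst sum_list_pairs_commute) (simp add: sum_list_pairs_mult_left scale_sum_list_H mult.assoc)
    then show "(\<Sum>(v1,v2)\<leftarrow>\<Delta> v. G u v1 v2) = (\<Sum>(b1,b2)\<leftarrow>\<Delta> b. sH (\<phi> (S (b1 * u))) (sH (\<epsilon> v) b2))"
      by (simp add: antipode_right)
  qed
  also have "\<dots> = (\<Sum>(b1,b2)\<leftarrow>\<Delta> b. \<Sum>(u,v)\<leftarrow>\<Delta> x. sH (\<epsilon> v * \<phi> (S (b1 * u))) b2)"
    by (subst sum_list_pairs_commute) (simp add: mult.commute)
  also have "\<dots> = (\<Sum>(b1,b2)\<leftarrow>\<Delta> b. sH (\<phi> (S (b1 * (\<Sum>(u,v)\<leftarrow>\<Delta> x. sH (\<epsilon> v) u)))) b2)"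
    by (simp add: sum_list_pairs_mult_left S_sum_list phi_sum_list sum_list_scale_H)
  finally show ?thesis by (simp add: counit_right)
qed

lemma lin_phi_mult_left: "lin sH (*) (\<lambda>v. \<phi> (a * v))"
  and lin_phi_mult_right: "lin sH (*) (\<lambda>v. \<phi> (v * a))"
  and lin_phi_S_mult_right: "lin sH (*) (\<lambda>v. \<phi> (S (v * a)))"
  unfolding lin_def by (simp_all add: hsimps)

lemma phi_S_nonzero: "\<exists>h. \<phi> (S h) \<noteq> 0"
proof -
  obtain h where "\<phi> h \<noteq> 0" using phi_nonzero by blast
  moreover obtain d where "d * \<delta> = 1" using delta_invertible by blast
  ultimately have "\<phi> (S (h * d)) \<noteq> 0" by (simp add: phi_S mult.assoc)
  then show ?thesis by blast
qed

lemma right_null_first_leg_coordinates: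
  assumes null: "\<forall>a. \<phi> (a * w) = 0"
  obtains E lam where "\<And>u v. (u,v) \<in> set (\<Delta> w) \<Longrightarrow> u = (\<Sum>e\<in>E. sH (lam e u) e)"
    "\<And>e a. \<phi> (a * (\<Sum>(u,v)\<leftarrow>\<Delta> w. sH (lam e u) v)) = 0"
proof -
  obtain E lam where lam: "\<And>e. lin sH (*) (lam e)"
    and E: "\<And>u. u \<in> fst ` set (\<Delta> w) \<Longrightarrow> u = (\<Sum>e\<in>E. sH (lam e u) e)"
    by (rule finite_coordinates[OF vector_space_H, of "fst ` set (\<Delta> w)"]) auto
  have slice: "(\<Sum>(u,v)\<leftarrow>\<Delta> w. sH (\<phi> (a * v)) u) = 0" for a
    using strong_left_invariance[where a = a and b = w] null by simp
  have legs: "\<phi> (a * (\<Sum>(u,v)\<leftarrow>\<Delta> w. sH (lam e u) v)) = 0" for e a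
    unfolding lin_slice_swap[OF lam lin_phi_mult_left] slice by (rule lin_zero[OF lam])
  show ?thesis
  proof (rule that)
    fix u v assume "(u,v) \<in> set (\<Delta> w)"
    then show "u = (\<Sum>e\<in>E. sH (lam e u) e)" by (intro E) force
  qed (rule legs)
qed

lemma eps_eq_0_if_right_null:
  assumes null: "\<forall>a. \<phi> (a * w) = 0"
  shows "\<epsilon> w = 0"
proof -
  obtain E lam where E: "\<And>u v. (u,v) \<in> set (\<Delta> w) \<Longrightarrow> u = (\<Sum>e\<in>E. sH (lam e u) e)"
    and legs: "\<And>e a. \<phi> (a * (\<Sum>(u,v)\<leftarrow>\<Delta> w. sH (lam e u) v)) = 0"
    by (rule right_null_first_leg_coordinates[OF null]) (rule that)
  have "sH (\<epsilon> w) 1 = (\<Sum>(u,v)\<leftarrow>\<Delta> w. S u * v)" by (simp add: antipode_left)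
  also have "\<dots> = (\<Sum>e\<in>E. S e * (\<Sum>(u,v)\<leftarrow>\<Delta> w. sH (lam e u) v))"
    by (rule sum_expand_first_leg[OF _ E, where F = "\<lambda>u v. S u * v" and sU = sH])
      (rule bilinear_mapI; simp add: hsimps)
  finally have eq: "sH (\<epsilon> w) 1 = (\<Sum>e\<in>E. S e * (\<Sum>(u,v)\<leftarrow>\<Delta> w. sH (lam e u) v))" .
  have "\<epsilon> w * \<phi> a = 0" for a
  proof -
    have "\<epsilon> w * \<phi> a = \<phi> (a * sH (\<epsilon> w) 1)" by simp
    also have "\<dots> = (\<Sum>e\<in>E. \<phi> ((a * S e) * (\<Sum>(u,v)\<leftarrow>\<Delta> w. sH (lam e u) v)))"
      unfolding eq by (simp add: sum_distrib_left phi_sum mult.assoc)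
    finally show ?thesis by (simp add: legs)
  qed
  then show ?thesis using phi_nonzero by auto
qed

lemma phi_nondegenerate_right:
  assumes "\<forall>a. \<phi> (a * w) = 0"
  shows "w = 0"
proof -
  obtain E lam where E: "\<And>u v. (u,v) \<in> set (\<Delta> w) \<Longrightarrow> u = (\<Sum>e\<in>E. sH (lam e u) e)"
    and legs: "\<And>e a. \<phi> (a * (\<Sum>(u,v)\<leftarrow>\<Delta> w. sH (lam e u) v)) = 0"
    by (rule right_null_first_leg_coordinates[OF assms]) (rule that)
  have "w = (\<Sum>(u,v)\<leftarrow>\<Delta> w. sH (\<epsilon> v) u)" by (simp add: counit_right)
  also have "\<dots> = (\<Sum>e\<in>E. sH (\<epsilon> (\<Sum>(u,v)\<leftarrow>\<Delta> w. sH (lam e u) v)) e)"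
    by (rule sum_expand_first_leg[OF _ E, where F = "\<lambda>u v. sH (\<epsilon> v) u" and sU = sH])
      (rule bilinear_mapI; simp add: hsimps)
  also have "\<dots> = 0"
    using eps_eq_0_if_right_null legs by simp
  finally show ?thesis .
qed

lemma phi_S_left_null_second_leg_coordinates:
  assumes null: "\<forall>a. \<phi> (S (w * a)) = 0"
  obtains E lam where "\<And>u v. (u,v) \<in> set (\<Delta> w) \<Longrightarrow> v = (\<Sum>e\<in>E. sH (lam e v) e)"
    "\<And>e a. \<phi> (S ((\<Sum>(u,v)\<leftarrow>\<Delta> w. sH (lam e v) u) * a)) = 0"
proof -
  obtain E lam where lam: "\<And>e. lin sH (*) (lam e)"
    and E: "\<And>v. v \<in> snd ` set (\<Delta> w) \<Longrightarrow> v = (\<Sum>e\<in>E. sH (lam e v) e)"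
    by (rule finite_coordinates[OF vector_space_H, of "snd ` set (\<Delta> w)"]) auto
  have "(\<Sum>(u,v)\<leftarrow>\<Delta> w. sH (\<phi> (S (u * a))) v) = 0" for a
    using strong_right_invariance[where x = a and b = w] null by simp
  then have slice: "(\<Sum>(u,v)\<leftarrow>map prod.swap (\<Delta> w). sH (\<phi> (S (v * a))) u) = 0" for a
    by (simp only: sum_list_map_swap)
  have "\<phi> (S ((\<Sum>(u,v)\<leftarrow>map prod.swap (\<Delta> w). sH (lam e u) v) * a)) = 0" for e a
    unfolding lin_slice_swap[OF lam lin_phi_S_mult_right] slice by (rule lin_zero[OF lam])
  then have legs: "\<phi> (S ((\<Sum>(u,v)\<leftarrow>\<Delta> w. sH (lam e v) u) * a)) = 0" for e a
    by (simp only: sum_list_map_swap)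
  show ?thesis
  proof (rule that)
    fix u v assume "(u,v) \<in> set (\<Delta> w)"
    then show "v = (\<Sum>e\<in>E. sH (lam e v) e)" by (intro E) force
  qed (rule legs)
qed

lemma eps_eq_0_if_phi_S_left_null:
  assumes null: "\<forall>a. \<phi> (S (w * a)) = 0"
  shows "\<epsilon> w = 0"
proof -
  obtain E lam where E: "\<And>u v. (u,v) \<in> set (\<Delta> w) \<Longrightarrow> v = (\<Sum>e\<in>E. sH (lam e v) e)"
    and legs: "\<And>e a. \<phi> (S ((\<Sum>(u,v)\<leftarrow>\<Delta> w. sH (lam e v) u) * a)) = 0"
    by (rule phi_S_left_null_second_leg_coordinates[OF null]) (rule that)
  have "sH (\<epsilon> w) 1 = (\<Sum>(u,v)\<leftarrow>\<Delta> w. u * S v)" by (simp add: antipode_right)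
  also have "\<dots> = (\<Sum>e\<in>E. (\<Sum>(u,v)\<leftarrow>\<Delta> w. sH (lam e v) u) * S e)"
    by (rule sum_expand_second_leg[OF _ E, where F = "\<lambda>u v. u * S v" and sU = sH])
      (rule bilinear_mapI; simp add: hsimps)
  finally have eq: "sH (\<epsilon> w) 1 = (\<Sum>e\<in>E. (\<Sum>(u,v)\<leftarrow>\<Delta> w. sH (lam e v) u) * S e)" .
  have "\<epsilon> w * \<phi> (S a) = 0" for a
  proof -
    have "\<epsilon> w * \<phi> (S a) = \<phi> (S (sH (\<epsilon> w) 1 * a))" by simp
    also have "\<dots> = (\<Sum>e\<in>E. \<phi> (S ((\<Sum>(u,v)\<leftarrow>\<Delta> w. sH (lam e v) u) * (S e * a))))"
      unfolding eq by (simp add: sum_distrib_right lin_sum[OF S_lin] phi_sum mult.assoc)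
    finally show ?thesis by (simp add: legs)
  qed
  then show ?thesis using phi_S_nonzero by auto
qed

lemma phi_S_nondegenerate_left:
  assumes "\<forall>a. \<phi> (S (w * a)) = 0"
  shows "w = 0"
proof -
  obtain E lam where E: "\<And>u v. (u,v) \<in> set (\<Delta> w) \<Longrightarrow> v = (\<Sum>e\<in>E. sH (lam e v) e)"
    and legs: "\<And>e a. \<phi> (S ((\<Sum>(u,v)\<leftarrow>\<Delta> w. sH (lam e v) u) * a)) = 0"
    by (rule phi_S_left_null_second_leg_coordinates[OF assms]) (rule that)
  have "w = (\<Sum>(u,v)\<leftarrow>\<Delta> w. sH (\<epsilon> u) v)" by (simp add: counit_left)
  also have "\<dots> = (\<Sum>e\<in>E. sH (\<epsilon> (\<Sum>(u,v)\<leftarrow>\<Delta> w. sH (lam e v) u)) e)"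
    by (rule sum_expand_second_leg[OF _ E, where F = "\<lambda>u v. sH (\<epsilon> u) v" and sU = sH])
      (rule bilinear_mapI; simp add: hsimps)
  also have "\<dots> = 0"
    using eps_eq_0_if_phi_S_left_null legs by simp
  finally show ?thesis .
qed

lemma phi_nondegenerate_left:
  assumes "\<forall>a. \<phi> (w * a) = 0"
  shows "w = 0"
  by (rule phi_S_nondegenerate_left) (use assms in \<open>simp add: phi_S mult.assoc\<close>)

text \<open>The slices \<open>(id \<otimes> \<phi>)((1 \<otimes> a)\<Delta>(b))\<close> lie in the range of \<open>S\<close> by strong left
  invariance, and a functional \<open>g\<close> killing all of them has \<open>(g \<otimes> id)\<Delta>(b) = 0\<close> by
  faithfulness, hence \<open>g = \<epsilon> \<circ> (g \<otimes> id)\<Delta> = 0\<close>.\<close>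

lemma antipode_surj: "surj S"
proof -
  define X where "X = range (\<lambda>(a,b). \<Sum>(b1,b2)\<leftarrow>\<Delta> b. sH (\<phi> (a * b2)) b1)"
  have "X \<subseteq> range S"
  proof
    fix x assume "x \<in> X"
    then obtain a b where "x = (\<Sum>(b1,b2)\<leftarrow>\<Delta> b. sH (\<phi> (a * b2)) b1)"
      unfolding X_def by auto
    then have "x = S (\<Sum>(a1,a2)\<leftarrow>\<Delta> a. sH (\<phi> (a2 * b)) a1)"
      by (simp add: S_sum_list strong_left_invariance)
    then show "x \<in> range S" by blast
  qed
  moreover have "H.subspace (range S)"
  proof -
    interpret vector_space_pair sH sH by unfold_locales
    show ?thesis
      using linear_subspace_image[OF _ H.subspace_UNIV] S_lin
        lin_iff_linear[OF vector_space_H vector_space_H] by blast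
  qed
  ultimately have "H.span X \<subseteq> range S" by (rule H.span_minimal)
  moreover have "c \<in> H.span X" for c
  proof (rule in_span_if_annihilated[OF vector_space_H])
    fix g assume g: "lin sH (*) g" and vanish: "\<And>x. x \<in> X \<Longrightarrow> g x = 0"
    have "(\<Sum>(b1,b2)\<leftarrow>\<Delta> b. sH (g b1) b2) = 0" for b
    proof (rule phi_nondegenerate_right, rule allI)
      fix a
      show "\<phi> (a * (\<Sum>(b1,b2)\<leftarrow>\<Delta> b. sH (g b1) b2)) = 0"
        unfolding lin_slice_swap[OF g lin_phi_mult_left] by (rule vanish) (auto simp: X_def)
    qed
    then have "\<epsilon> (\<Sum>(b1,b2)\<leftarrow>\<Delta> c. sH (g b1) b2) = 0" by simp
    then show "g c = 0"
      unfolding lin_slice_swap[OF g eps_lin] counit_right .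
  qed
  ultimately show ?thesis by blast
qed

lemma grouplike_inverse:
  assumes g: "teq2 sH sH (\<Delta> g) [(g, g)]" and inv: "g * d = 1" "d * g = 1"
  shows "teq2 sH sH (\<Delta> d) [(d, d)]"
  unfolding teq2_def
proof (intro allI impI)
  fix f assume f: "bilin sH sH f"
  define f' where "f' u v = f (u * d) (v * d)" for u v
  have f': "bilin sH sH f'" and f'_shift: "bilin sH sH (\<lambda>x y. f' (u * x) (v * y))" for u v
    using f unfolding bilin_def f'_def lin_def by (simp_all add: distrib_left distrib_right)
  have "(\<Sum>(u,v)\<leftarrow>\<Delta> d. f u v) = (\<Sum>(a,b)\<leftarrow>\<Delta> d. f' (a * g) (b * g))"
    by (simp add: f'_def mult.assoc inv)
  also have "\<dots> = (\<Sum>(a,b)\<leftarrow>\<Delta> d. \<Sum>(x,y)\<leftarrow>\<Delta> g. f' (a * x) (b * y))"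
    using g f'_shift unfolding teq2_def by (auto intro!: sum_list_cong_pairs)
  also have "\<dots> = (\<Sum>(u,v)\<leftarrow>\<Delta> (d * g). f' u v)"
    using Delta_mult f' unfolding teq2_def by (simp add: sum_list_tmult)
  also have "\<dots> = f' 1 1"
    using Delta_one f' inv unfolding teq2_def by simp
  finally show "(\<Sum>(u,v)\<leftarrow>\<Delta> d. f u v) = (\<Sum>(u,v)\<leftarrow>[(d, d)]. f u v)"
    by (simp add: f'_def)
qed

text \<open>Right invariance of \<open>\<phi> \<circ> S\<close>, applied to \<open>h \<delta>\<^sup>-\<^sup>1\<close>.\<close>

lemma phi_slice_modular: "(\<Sum>(u,v)\<leftarrow>\<Delta> h. sH (\<phi> u) v) = sH (\<phi> h) \<delta>"
proof -
  obtain d where d: "\<delta> * d = 1" "d * \<delta> = 1" using delta_invertible by blast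
  have Delta_d: "teq2 sH sH (\<Delta> d) [(d, d)]"
    by (rule grouplike_inverse[OF Delta_delta d])
  have phi_S_slice: "bilinear_map sH sH sH (\<lambda>u v. sH (\<phi> (S u)) v)"
    and shifted: "bilinear_map sH sH sH (\<lambda>x y. sH (\<phi> (S (u * x))) (v * y))" for u v
    by (rule bilinear_mapI; simp add: hsimps)+
  have "sH (\<phi> h) 1 = sH (\<phi> (S (h * d))) 1" by (simp add: phi_S mult.assoc d)
  also have "\<dots> = (\<Sum>(a,b)\<leftarrow>\<Delta> h. \<Sum>(x,y)\<leftarrow>\<Delta> d. sH (\<phi> (S (a * x))) (b * y))"
    by (simp add: phi_S_right_invariant[symmetric] Delta_mult_sum[OF vector_space_H phi_S_slice])
  also have "\<dots> = (\<Sum>(a,b)\<leftarrow>\<Delta> h. sH (\<phi> (S (a * d))) (b * d))"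
    by (rule sum_list_cong_pairs) (simp add: teq2_sum_eq[OF Delta_d vector_space_H shifted])
  also have "\<dots> = (\<Sum>(a,b)\<leftarrow>\<Delta> h. sH (\<phi> a) b) * d"
    by (simp add: phi_S mult.assoc d sum_list_pairs_mult_right)
  finally have "sH (\<phi> h) 1 * \<delta> = (\<Sum>(a,b)\<leftarrow>\<Delta> h. sH (\<phi> a) b) * d * \<delta>" by simp
  then show ?thesis by (simp add: mult.assoc d)
qed

end

section \<open>Galois objects\<close>

locale galois_object = hopf_modular sH \<Delta> \<epsilon> S \<phi> \<delta>
  for sH :: "'k::field \<Rightarrow> 'h::ring_1 \<Rightarrow> 'h" and \<Delta> \<epsilon> S \<phi> \<delta> +
  fixes sA :: "'k \<Rightarrow> 'a::ring \<Rightarrow> 'a" and \<alpha> :: "'a \<Rightarrow> ('a \<times> 'h) list"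
    and I :: "'i set" and p :: "'i \<Rightarrow> 'a"
  assumes galois: "I_galois_object sA sH \<Delta> \<epsilon> \<alpha> I p"
begin

abbreviation "coinvA \<equiv> coinv sA sH \<alpha>"
abbreviation "Phi \<equiv> Phi_map sA \<alpha> \<phi>"

lemma comodule_algebra: "comodule_algebra sA sH \<Delta> \<epsilon> \<alpha>"
  using galois unfolding I_galois_object_def by blast

lemma k_algebra_A: "k_algebra sA"
  using comodule_algebra unfolding comodule_algebra_def by blast

lemma vector_space_A: "vector_space sA"
  using k_algebra_A unfolding k_algebra_def by blast

sublocale A: vector_space sA by (rule vector_space_A)

lemma scaleA_mult_left[simp]: "sA c x * y = sA c (x * y)"
  and scaleA_mult_right[simp]: "x * sA c y = sA c (x * y)"
  using k_algebra_A unfolding k_algebra_def by metis+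

lemma alpha_add: "teq2 sA sH (\<alpha> (x + y)) (\<alpha> x @ \<alpha> y)"
  and alpha_scale: "teq2 sA sH (\<alpha> (sA c x)) (map (\<lambda>(u,v). (sA c u, v)) (\<alpha> x))"
  and alpha_mult: "teq2 sA sH (\<alpha> (x * y)) (tmult (\<alpha> x) (\<alpha> y))"
  and alpha_coassoc: "teq3 sA sH sH [(b, g, h). (a, h) \<leftarrow> \<alpha> x, (b, g) \<leftarrow> \<alpha> a]
                          [(a, h1, h2). (a, h) \<leftarrow> \<alpha> x, (h1, h2) \<leftarrow> \<Delta> h]"
  and alpha_counit: "(\<Sum>(a,h)\<leftarrow>\<alpha> x. sA (\<epsilon> h) a) = x"
  using comodule_algebra unfolding comodule_algebra_def by blast+

lemma p_nonzero: "i \<in> I \<Longrightarrow> p i \<noteq> 0"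
  and p_coinv: "i \<in> I \<Longrightarrow> p i \<in> coinvA"
  and p_mult: "i \<in> I \<Longrightarrow> j \<in> I \<Longrightarrow> p i * p j = (if i = j then p i else 0)"
  and coinv_span: "b \<in> coinvA \<Longrightarrow> \<exists>F c. finite F \<and> F \<subseteq> I \<and> b = (\<Sum>i\<in>F. sA (c i) (p i))"
  and galois_surj: "\<exists>xs. teq2 sA sH (galois_map \<alpha> xs) zs"
  using galois unfolding I_galois_object_def by blast+

lemma coinv_iff: "b \<in> coinvA \<longleftrightarrow> teq2 sA sH (\<alpha> b) [(b, 1)]"
  unfolding coinv_def by simp

lemmas scale_sum_list_A = scale_sum_list_pairs[OF vector_space_A]
lemmas sum_list_scale_A = sum_list_pairs_scale[OF vector_space_A]

lemmas asimps = A.scale_right_distrib A.scale_left_distrib hsimps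

lemma alpha_add_sum:
  assumes "vector_space sU" "bilinear_map sA sH sU F"
  shows "(\<Sum>(u,v)\<leftarrow>\<alpha> (x + y). F u v) = (\<Sum>(u,v)\<leftarrow>\<alpha> x. F u v) + (\<Sum>(u,v)\<leftarrow>\<alpha> y. F u v)"
  using teq2_sum_eq[OF alpha_add assms] by simp

lemma alpha_zero_sum:
  assumes "vector_space sU" "bilinear_map sA sH sU F"
  shows "(\<Sum>(u,v)\<leftarrow>\<alpha> 0. F u v) = 0"
  using alpha_add_sum[OF assms, of 0 0] by simp

lemma alpha_scale_sum:
  assumes "vector_space sU" "bilinear_map sA sH sU F"
  shows "(\<Sum>(u,v)\<leftarrow>\<alpha> (sA c x). F u v) = sU c (\<Sum>(u,v)\<leftarrow>\<alpha> x. F u v)"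
proof -
  have "(\<Sum>(u,v)\<leftarrow>\<alpha> (sA c x). F u v) = (\<Sum>(u,v)\<leftarrow>\<alpha> x. F (sA c u) v)"
    using teq2_sum_eq[OF alpha_scale assms] unfolding sum_list_map_fst .
  also have "\<dots> = (\<Sum>(u,v)\<leftarrow>\<alpha> x. sU c (F u v))"
    using assms(2) unfolding bilinear_map_def lin_def by simp
  finally show ?thesis by (simp add: scale_sum_list_pairs[OF assms(1)])
qed

lemma alpha_sum_list_sum:
  assumes "vector_space sU" "bilinear_map sA sH sU F"
  shows "(\<Sum>(u,v)\<leftarrow>\<alpha> (\<Sum>(a,b)\<leftarrow>L. G a b). F u v) = (\<Sum>(a,b)\<leftarrow>L. \<Sum>(u,v)\<leftarrow>\<alpha> (G a b). F u v)"
  by (induction L) (auto simp: alpha_zero_sum[OF assms] alpha_add_sum[OF assms])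

lemma alpha_mult_sum:
  assumes "vector_space sU" "bilinear_map sA sH sU F"
  shows "(\<Sum>(u,v)\<leftarrow>\<alpha> (x * y). F u v) = (\<Sum>(a,b)\<leftarrow>\<alpha> x. \<Sum>(c,d)\<leftarrow>\<alpha> y. F (a * c) (b * d))"
  using teq2_sum_eq[OF alpha_mult assms] by (simp add: sum_list_tmult)

lemma alpha_coassoc_sum:
  assumes "vector_space sX" "trilinear_map sA sH sH sX F"
  shows "(\<Sum>(a,h)\<leftarrow>\<alpha> x. \<Sum>(b,g)\<leftarrow>\<alpha> a. F b g h) = (\<Sum>(a,h)\<leftarrow>\<alpha> x. \<Sum>(h1,h2)\<leftarrow>\<Delta> h. F a h1 h2)"
  using teq3_sum_eq[OF alpha_coassoc assms] unfolding sum_list_iterate_first sum_list_iterate_second .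

lemma alpha_coinv_mult_sum:
  assumes U: "vector_space sU" and F: "bilinear_map sA sH sU F" and b: "b \<in> coinvA"
  shows "(\<Sum>(u,v)\<leftarrow>\<alpha> (b * x). F u v) = (\<Sum>(c,g)\<leftarrow>\<alpha> x. F (b * c) g)"
    and "(\<Sum>(u,v)\<leftarrow>\<alpha> (x * b). F u v) = (\<Sum>(c,g)\<leftarrow>\<alpha> x. F (c * b) g)"
proof -
  have "bilinear_map sA sH sU (\<lambda>a h. \<Sum>(c,g)\<leftarrow>\<alpha> x. F (a * c) (h * g))"
    using F unfolding bilinear_map_def lin_def
    by (simp add: distrib_right distrib_left sum_list_add_pairs scale_sum_list_pairs[OF U])
  then show "(\<Sum>(u,v)\<leftarrow>\<alpha> (b * x). F u v) = (\<Sum>(c,g)\<leftarrow>\<alpha> x. F (b * c) g)"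
    using teq2_sum_eq[OF b[unfolded coinv_iff] U] by (simp add: alpha_mult_sum[OF U F])
  have "bilinear_map sA sH sU (\<lambda>a h. F (c * a) (g * h))" for c g
    using F unfolding bilinear_map_def lin_def by (simp add: distrib_right distrib_left)
  then have "(\<Sum>(a,h)\<leftarrow>\<alpha> b. F (c * a) (g * h)) = F (c * b) g" for c g
    using teq2_sum_eq[OF b[unfolded coinv_iff] U] by simp
  then show "(\<Sum>(u,v)\<leftarrow>\<alpha> (x * b). F u v) = (\<Sum>(c,g)\<leftarrow>\<alpha> x. F (c * b) g)"
    by (simp add: alpha_mult_sum[OF U F])
qed

lemma phi_slice_A: "bilinear_map sA sH sA (\<lambda>a h. sA (\<phi> h) a)"
  by (rule bilinear_mapI) (simp_all add: asimps)

lemma Phi_coinv: "Phi x \<in> coinvA"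
  unfolding coinv_iff teq2_def
proof (intro allI impI)
  fix f assume f: "bilin sA sH f"
  have F: "bilinear_map sA sH (*) f" using f by (simp add: bilinear_map_bilin)
  have l1: "lin sA (*) (\<lambda>u. f u v)" and l2: "lin sH (*) (f u)" for u v
    using f unfolding bilin_def by blast+
  have tr: "trilinear_map sA sH sH (*) (\<lambda>b g h. \<phi> h * f b g)"
    by (rule trilinear_mapI)
      (simp_all add: lin_add[OF l1] lin_scale[OF l1] lin_add[OF l2] lin_scale[OF l2] algebra_simps)
  have "(\<Sum>(u,v)\<leftarrow>\<alpha> (Phi x). f u v) = (\<Sum>(a,h)\<leftarrow>\<alpha> x. \<Sum>(b,g)\<leftarrow>\<alpha> a. \<phi> h * f b g)"
    unfolding Phi_map_def
    by (simp add: alpha_sum_list_sum[OF vector_space_field F] alpha_scale_sum[OF vector_space_field F]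
        sum_list_pairs_mult_left)
  also have "\<dots> = (\<Sum>(a,h)\<leftarrow>\<alpha> x. \<Sum>(h1,h2)\<leftarrow>\<Delta> h. \<phi> h2 * f a h1)"
    by (rule alpha_coassoc_sum[OF vector_space_field tr])
  also have "\<dots> = (\<Sum>(a,h)\<leftarrow>\<alpha> x. f a (\<Sum>(h1,h2)\<leftarrow>\<Delta> h. sH (\<phi> h2) h1))"
    by (simp add: lin_sum_list[OF l2] lin_scale[OF l2])
  also have "\<dots> = f (Phi x) 1"
    unfolding Phi_map_def phi_left_invariant
    by (simp add: lin_sum_list[OF l1] lin_scale[OF l1] lin_scale[OF l2])
  finally show "(\<Sum>(u,v)\<leftarrow>\<alpha> (Phi x). f u v) = (\<Sum>(u,v)\<leftarrow>[(Phi x, 1)]. f u v)" by simp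
qed

lemma Phi_coinv_mult:
  assumes "b \<in> coinvA"
  shows "Phi (b * x) = b * Phi x" and "Phi (x * b) = Phi x * b"
  unfolding Phi_map_def
  by (simp_all add: alpha_coinv_mult_sum[OF vector_space_A phi_slice_A assms]
      sum_list_pairs_mult_left sum_list_pairs_mult_right)

lemma p_inj_on: "inj_on p I"
proof (rule inj_onI)
  fix i j assume ij: "i \<in> I" "j \<in> I" "p i = p j"
  show "i = j"
  proof (rule ccontr)
    assume "i \<noteq> j"
    then have "p i = 0" using p_mult[OF ij(1,1)] p_mult[OF ij(1,2)] ij(3) by simp
    with p_nonzero[OF ij(1)] show False ..
  qed
qed

lemma p_independent: "A.independent (p ` I)"
  unfolding A.independent_explicit_module
proof (intro allI impI)
  fix t u v assume t: "finite t" "t \<subseteq> p ` I" "(\<Sum>v\<in>t. sA (u v) v) = 0" "v \<in> t"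
  have "0 = (\<Sum>w\<in>t. sA (u w) w) * v" using t(3) by simp
  also have "\<dots> = (\<Sum>w\<in>t. if w = v then sA (u v) v else 0)"
    unfolding sum_distrib_right
  proof (rule sum.cong[OF refl])
    fix w assume "w \<in> t"
    then obtain i j where "i \<in> I" "j \<in> I" "w = p i" "v = p j" using t by blast
    then show "sA (u w) w * v = (if w = v then sA (u v) v else 0)"
      using p_mult p_inj_on by (auto dest: inj_onD)
  qed
  also have "\<dots> = sA (u v) v" using t by simp
  finally show "u v = 0" using t p_nonzero by auto
qed

text \<open>A linear functional on \<open>A\<close> that is \<open>1\<close> on every \<open>p i\<close>; on \<open>A^\<alpha>\<close> it is the map \<open>\<S>\<close>.\<close>

definition scrS_lin :: "'a \<Rightarrow> 'k" where
  "scrS_lin = (SOME l. lin sA (*) l \<and> (\<forall>i\<in>I. l (p i) = 1))"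

lemma scrS_lin: "lin sA (*) scrS_lin" and scrS_lin_p: "i \<in> I \<Longrightarrow> scrS_lin (p i) = 1"
proof -
  obtain g where "lin sA (*) g" "\<And>x. x \<in> p ` I \<Longrightarrow> g x = 1"
    by (rule lin_functional_extend[OF vector_space_A p_independent, where f = "\<lambda>_. 1"]) (rule that)
  then have "\<exists>l. lin sA (*) l \<and> (\<forall>i\<in>I. l (p i) = 1)" by blast
  then have "lin sA (*) scrS_lin \<and> (\<forall>i\<in>I. scrS_lin (p i) = 1)"
    unfolding scrS_lin_def by (rule someI_ex)
  then show "lin sA (*) scrS_lin" "i \<in> I \<Longrightarrow> scrS_lin (p i) = 1" by blast+
qed

lemma scrS_lin_span:
  assumes "F \<subseteq> I" shows "scrS_lin (\<Sum>i\<in>F. sA (c i) (p i)) = sum c F"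
  using assms by (simp add: lin_sum[OF scrS_lin] lin_scale[OF scrS_lin] scrS_lin_p subset_iff)

lemma phi_A_eq: "phi_A sA \<alpha> \<phi> I p x = scrS_lin (Phi x)"
proof -
  obtain F c where Fc: "finite F" "F \<subseteq> I" "Phi x = (\<Sum>i\<in>F. sA (c i) (p i))"
    using coinv_span[OF Phi_coinv] by blast
  show ?thesis
    unfolding phi_A_def scrS_def
  proof (rule the_equality)
    show "\<exists>F c. finite F \<and> F \<subseteq> I \<and> Phi x = (\<Sum>i\<in>F. sA (c i) (p i)) \<and> scrS_lin (Phi x) = sum c F"
      using Fc scrS_lin_span[OF Fc(2)] by auto
  next
    fix s assume "\<exists>F c. finite F \<and> F \<subseteq> I \<and> Phi x = (\<Sum>i\<in>F. sA (c i) (p i)) \<and> s = sum c F"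
    then show "s = scrS_lin (Phi x)" using scrS_lin_span by auto
  qed
qed

lemma p_mult_span:
  assumes "i \<in> I" "F \<subseteq> I" "finite F"
  shows "p i * (\<Sum>j\<in>F. sA (c j) (p j)) = (if i \<in> F then sA (c i) (p i) else 0)"
    and "(\<Sum>j\<in>F. sA (c j) (p j)) * p i = (if i \<in> F then sA (c i) (p i) else 0)"
proof -
  have "p i * sA (c j) (p j) = (if j = i then sA (c j) (p j) else 0)"
    and "sA (c j) (p j) * p i = (if j = i then sA (c j) (p j) else 0)" if "j \<in> F" for j
    using that assms p_mult by auto
  then show "p i * (\<Sum>j\<in>F. sA (c j) (p j)) = (if i \<in> F then sA (c i) (p i) else 0)"
    and "(\<Sum>j\<in>F. sA (c j) (p j)) * p i = (if i \<in> F then sA (c i) (p i) else 0)"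
    using assms(3) by (simp_all add: sum_distrib_left sum_distrib_right sum.delta' cong: sum.cong)
qed

lemma coinv_eq_0:
  assumes b: "b \<in> coinvA" and z: "\<And>i. i \<in> I \<Longrightarrow> scrS_lin (p i * b) = 0"
  shows "b = 0"
proof -
  obtain F c where Fc: "finite F" "F \<subseteq> I" "b = (\<Sum>i\<in>F. sA (c i) (p i))"
    using coinv_span[OF b] by blast
  have "c i = 0" if "i \<in> F" for i
    using z[of i] that Fc p_mult_span(1)[of i F c] by (auto simp: lin_scale[OF scrS_lin] scrS_lin_p)
  then show ?thesis using Fc by simp
qed

lemma coinv_mult_p_commute:
  assumes "b \<in> coinvA" "i \<in> I" shows "p i * b = b * p i"
proof -
  obtain F c where "finite F" "F \<subseteq> I" "b = (\<Sum>i\<in>F. sA (c i) (p i))"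
    using coinv_span[OF assms(1)] by blast
  then show ?thesis using p_mult_span[OF assms(2)] by simp
qed

lemma Phi_eq_0_if_phi_A_right_null:
  assumes "\<forall>x. phi_A sA \<alpha> \<phi> I p (x * a) = 0"
  shows "Phi (x * a) = 0"
proof (rule coinv_eq_0[OF Phi_coinv])
  fix i assume i: "i \<in> I"
  have "p i * Phi (x * a) = Phi ((p i * x) * a)"
    by (simp add: Phi_coinv_mult(1)[OF p_coinv[OF i]] mult.assoc)
  then show "scrS_lin (p i * Phi (x * a)) = 0" using assms phi_A_eq by simp
qed

lemma Phi_eq_0_if_phi_A_left_null:
  assumes "\<forall>x. phi_A sA \<alpha> \<phi> I p (a * x) = 0"
  shows "Phi (a * x) = 0"
proof (rule coinv_eq_0[OF Phi_coinv])
  fix i assume i: "i \<in> I"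
  have "p i * Phi (a * x) = Phi (a * (x * p i))"
    by (simp add: coinv_mult_p_commute[OF Phi_coinv i] Phi_coinv_mult(2)[OF p_coinv[OF i], symmetric]
        mult.assoc)
  then show "scrS_lin (p i * Phi (a * x)) = 0" using assms phi_A_eq by simp
qed

lemma coinv_local_unit:
  assumes "finite B" "B \<subseteq> coinvA"
  obtains F where "finite F" "F \<subseteq> I"
    "\<And>b. b \<in> B \<Longrightarrow> (\<Sum>j\<in>F. p j) * b = b" "\<And>b. b \<in> B \<Longrightarrow> b * (\<Sum>j\<in>F. p j) = b"
proof -
  have "\<forall>b\<in>B. \<exists>R. finite (fst R) \<and> fst R \<subseteq> I \<and> b = (\<Sum>i\<in>fst R. sA (snd R i) (p i))"
    using coinv_span assms(2) by fastforce
  then obtain R where R: "\<And>b. b \<in> B \<Longrightarrow> finite (fst (R b)) \<and> fst (R b) \<subseteq> I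
      \<and> b = (\<Sum>i\<in>fst (R b). sA (snd (R b) i) (p i))"
    by (metis bchoice)
  define F where "F = (\<Union>b\<in>B. fst (R b))"
  have F: "finite F" "F \<subseteq> I" using R assms(1) unfolding F_def by auto
  have unit: "(\<Sum>j\<in>F. p j) * p i = p i" "p i * (\<Sum>j\<in>F. p j) = p i" if "i \<in> F" for i
    using p_mult_span[of i F "\<lambda>_. 1"] that F by auto
  show ?thesis
  proof (rule that[OF F])
    fix b assume "b \<in> B"
    then obtain Fb c where sub: "Fb \<subseteq> F" and b: "b = (\<Sum>i\<in>Fb. sA (c i) (p i))"
      using R unfolding F_def by blast
    have "(\<Sum>j\<in>F. p j) * b = (\<Sum>i\<in>Fb. sA (c i) ((\<Sum>j\<in>F. p j) * p i))"
      unfolding b by (simp only: sum_distrib_left scaleA_mult_right)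
    also have "\<dots> = b" unfolding b using unit sub by (auto intro!: sum.cong)
    finally show "(\<Sum>j\<in>F. p j) * b = b" .
    have "b * (\<Sum>j\<in>F. p j) = (\<Sum>i\<in>Fb. sA (c i) (p i * (\<Sum>j\<in>F. p j)))"
      unfolding b by (simp only: sum_distrib_right scaleA_mult_left)
    also have "\<dots> = b" unfolding b using unit sub by (auto intro!: sum.cong)
    finally show "b * (\<Sum>j\<in>F. p j) = b" .
  qed
qed

lemma right_local_unit:
  obtains F where "finite F" "F \<subseteq> I" "a * (\<Sum>j\<in>F. p j) = a"
proof -
  obtain h where h: "\<phi> h = 1"
    using phi_nonzero by (metis phi_scale field_class.field_inverse)
  obtain xs where xs: "teq2 sA sH (galois_map \<alpha> xs) [(a, h)]" using galois_surj by blast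
  have a: "a = (\<Sum>(x,y)\<leftarrow>xs. x * Phi y)"
    using teq2_sum_eq[OF xs vector_space_A phi_slice_A] h
    by (simp add: sum_list_galois_map Phi_map_def sum_list_pairs_mult_left)
  obtain F where F: "finite F" "F \<subseteq> I" "\<And>y. y \<in> Phi ` snd ` set xs \<Longrightarrow> y * (\<Sum>j\<in>F. p j) = y"
    by (rule coinv_local_unit[of "Phi ` snd ` set xs"]) (auto simp: Phi_coinv)
  have "Phi y * (\<Sum>j\<in>F. p j) = Phi y" if "(x, y) \<in> set xs" for x y
    using F(3) that by force
  then have "a * (\<Sum>j\<in>F. p j) = a"
    by (subst (1 2) a) (auto simp: sum_list_pairs_mult_right mult.assoc intro!: sum_list_cong_pairs)
  with F(1,2) that show ?thesis by blast
qed

lemma eq_0_if_left_p_null: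
  assumes n: "n = (\<Sum>(x,y)\<leftarrow>xs. Phi x * y)" and null: "\<And>j. j \<in> I \<Longrightarrow> p j * n = 0"
  shows "n = 0"
proof -
  obtain F where F: "finite F" "F \<subseteq> I" "\<And>x. x \<in> Phi ` fst ` set xs \<Longrightarrow> (\<Sum>j\<in>F. p j) * x = x"
    by (rule coinv_local_unit[of "Phi ` fst ` set xs"]) (auto simp: Phi_coinv)
  have "(\<Sum>j\<in>F. p j) * Phi x = Phi x" if "(x, y) \<in> set xs" for x y
    using F(3) that by force
  then have "n = (\<Sum>j\<in>F. p j) * n"
    unfolding n by (auto simp: sum_list_pairs_mult_left mult.assoc[symmetric] intro!: sum_list_cong_pairs)
  also have "\<dots> = 0"
    unfolding sum_distrib_right by (rule sum.neutral) (use null F(2) in blast)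
  finally show ?thesis .
qed

text \<open>Evaluates \<open>\<Sum> \<Phi>(ell x) y\<close> over a Galois preimage \<open>xs\<close> of \<open>zs\<close> in terms of \<open>zs\<close> alone;
  this is how surjectivity of the Galois map is used.\<close>

lemma Phi_galois_preimage:
  assumes l: "lin sA sA ell" and right_linear: "\<And>x c. ell (x * c) = ell x * c"
    and xs: "teq2 sA sH (galois_map \<alpha> xs) zs"
  shows "(\<Sum>(x,y)\<leftarrow>xs. Phi (ell x) * y) = (\<Sum>(z,h)\<leftarrow>zs. \<Sum>(c,g)\<leftarrow>\<alpha> (ell z). sA (\<phi> (g * S h)) c)"
proof -
  have G: "bilinear_map sA sH sA (\<lambda>c t. sA (\<phi> (t * S g)) c)" for g
    by (rule bilinear_mapI) (simp_all add: asimps)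
  define F where "F z g = (\<Sum>(c,t)\<leftarrow>\<alpha> (ell z). sA (\<phi> (t * S g)) c)" for z g
  have F: "bilinear_map sA sH sA F"
    by (rule bilinear_mapI) (simp_all add: F_def lin_add[OF l] lin_scale[OF l] alpha_add_sum[OF vector_space_A G]
        alpha_scale_sum[OF vector_space_A G] asimps sum_list_add_pairs scale_sum_list_A)
  have "(\<Sum>(c,h)\<leftarrow>\<alpha> y. F (x * c) h) = Phi (ell x) * y" for x y
  proof -
    define \<tau> where "\<tau> u2 t2 g = (\<Sum>(u1,t1)\<leftarrow>\<alpha> (ell x). sA (\<phi> (t1 * t2 * S g)) (u1 * u2))" for u2 t2 g
    have \<tau>: "trilinear_map sA sH sH sA \<tau>"
      by (rule trilinear_mapI) (simp_all add: \<tau>_def asimps sum_list_add_pairs scale_sum_list_A)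
    have "(\<Sum>(c,h)\<leftarrow>\<alpha> y. F (x * c) h)
        = (\<Sum>(c,g)\<leftarrow>\<alpha> y. \<Sum>(u1,t1)\<leftarrow>\<alpha> (ell x). \<Sum>(u2,t2)\<leftarrow>\<alpha> c. sA (\<phi> (t1 * t2 * S g)) (u1 * u2))"
      by (simp add: F_def right_linear alpha_mult_sum[OF vector_space_A G] mult.assoc)
    also have "\<dots> = (\<Sum>(c,g)\<leftarrow>\<alpha> y. \<Sum>(u2,t2)\<leftarrow>\<alpha> c. \<tau> u2 t2 g)"
      unfolding \<tau>_def by (rule sum_list_cong_pairs) (rule sum_list_pairs_commute)
    also have "\<dots> = (\<Sum>(c,g)\<leftarrow>\<alpha> y. \<Sum>(g1,g2)\<leftarrow>\<Delta> g. \<tau> c g1 g2)"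
      by (rule alpha_coassoc_sum[OF vector_space_A \<tau>])
    also have "\<dots> = (\<Sum>(c,g)\<leftarrow>\<alpha> y. \<Sum>(u1,t1)\<leftarrow>\<alpha> (ell x).
                      sA (\<phi> (t1 * (\<Sum>(g1,g2)\<leftarrow>\<Delta> g. g1 * S g2))) (u1 * c))"
      unfolding \<tau>_def
      by (rule sum_list_cong_pairs, subst sum_list_pairs_commute)
        (simp add: sum_list_pairs_mult_left phi_sum_list sum_list_scale_A mult.assoc)
    also have "\<dots> = Phi (ell x) * (\<Sum>(c,g)\<leftarrow>\<alpha> y. sA (\<epsilon> g) c)"
      by (simp add: antipode_right Phi_map_def sum_list_pairs_mult_right sum_list_pairs_mult_left
          scale_sum_list_A)
    finally show ?thesis by (simp add: alpha_counit)
  qed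
  then have "(\<Sum>(u,v)\<leftarrow>galois_map \<alpha> xs. F u v) = (\<Sum>(x,y)\<leftarrow>xs. Phi (ell x) * y)"
    unfolding sum_list_galois_map by (auto intro: sum_list_cong_pairs)
  with teq2_sum_eq[OF xs vector_space_A F] show ?thesis
    unfolding F_def by simp
qed

lemma eq_0_if_phi_antipode_slices_vanish:
  assumes vanish: "\<And>h. (\<Sum>(c,g)\<leftarrow>\<alpha> n. sA (\<phi> (g * S h)) c) = 0"
  shows "n = 0"
proof -
  have "(\<Sum>(c,g)\<leftarrow>\<alpha> n. sA (\<epsilon> g) c) = 0"
  proof (rule sum_eq_0_if_slices_vanish[OF vector_space_A, where \<Theta> = "range (\<lambda>h g. \<phi> (g * S h))"])
    show "bilinear_map sA sH sA (\<lambda>c g. sA (\<epsilon> g) c)"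
      by (rule bilinear_mapI) (simp_all add: asimps)
  next
    fix w assume "\<And>\<theta>. \<theta> \<in> range (\<lambda>h g. \<phi> (g * S h)) \<Longrightarrow> \<theta> w = 0"
    then have "\<phi> (w * S h) = 0" for h by blast
    then have "\<phi> (w * k) = 0" for k using antipode_surj by (metis surjD)
    then show "w = 0" by (simp add: phi_nondegenerate_left)
  qed (use vanish lin_phi_mult_right in auto)
  then show ?thesis by (simp add: alpha_counit)
qed

lemma left_mult_alpha_sum_eq_0:
  assumes vanish: "\<And>h. (\<Sum>(c,g)\<leftarrow>\<alpha> a. sA (\<phi> (h * g)) (y * c)) = 0"
    and F: "bilinear_map sA sH sU F"
  shows "(\<Sum>(c,g)\<leftarrow>\<alpha> a. F (y * c) g) = 0"
proof -
  have "(\<Sum>(u,v)\<leftarrow>map (\<lambda>(c,g). (y * c, g)) (\<alpha> a). F u v) = 0"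
  proof (rule sum_eq_0_if_slices_vanish[OF vector_space_A F, where \<Theta> = "range (\<lambda>h g. \<phi> (h * g))"])
    fix \<theta> assume "\<theta> \<in> range (\<lambda>h g. \<phi> (h * g))"
    then obtain h where h: "\<theta> = (\<lambda>g. \<phi> (h * g))" by blast
    show "lin sH (*) \<theta>" unfolding h by (rule lin_phi_mult_left)
    show "(\<Sum>(u,v)\<leftarrow>map (\<lambda>(c,g). (y * c, g)) (\<alpha> a). sA (\<theta> v) u) = 0"
      unfolding h sum_list_map_fst by (rule vanish)
  next
    fix w assume "\<And>\<theta>. \<theta> \<in> range (\<lambda>h g. \<phi> (h * g)) \<Longrightarrow> \<theta> w = 0"
    then have "\<phi> (h * w) = 0" for h by blast
    then show "w = 0" by (simp add: phi_nondegenerate_right)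
  qed
  then show ?thesis by (simp only: sum_list_map_fst)
qed

lemma phi_A_faithful_left:
  assumes "\<forall>x. phi_A sA \<alpha> \<phi> I p (a * x) = 0"
  shows "a = 0"
proof -
  have null: "Phi (a * x) = 0" for x using Phi_eq_0_if_phi_A_left_null[OF assms] .
  have a_null: "a * z = 0" for z
  proof (rule eq_0_if_phi_antipode_slices_vanish)
    fix h
    obtain xs where xs: "teq2 sA sH (galois_map \<alpha> xs) [(z, h)]" using galois_surj by blast
    have "(\<Sum>(x,y)\<leftarrow>xs. Phi (a * x) * y) = (\<Sum>(z,h)\<leftarrow>[(z, h)]. \<Sum>(c,g)\<leftarrow>\<alpha> (a * z). sA (\<phi> (g * S h)) c)"
      by (rule Phi_galois_preimage[OF _ _ xs]) (simp_all add: lin_def distrib_left mult.assoc)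
    then show "(\<Sum>(c,g)\<leftarrow>\<alpha> (a * z). sA (\<phi> (g * S h)) c) = 0" using null by simp
  qed
  obtain F where "a * (\<Sum>j\<in>F. p j) = a" by (rule right_local_unit)
  with a_null show "a = 0" by simp
qed

lemma phi_A_faithful_right:
  assumes "\<forall>x. phi_A sA \<alpha> \<phi> I p (x * a) = 0"
  shows "a = 0"
proof (rule eq_0_if_phi_antipode_slices_vanish)
  have null: "Phi (x * a) = 0" for x using Phi_eq_0_if_phi_A_right_null[OF assms] .
  have slices: "(\<Sum>(c,g)\<leftarrow>\<alpha> a. sA (\<phi> (h * g)) (y * c)) = 0" for y h
  proof -
    obtain xs where xs: "teq2 sA sH (galois_map \<alpha> xs) [(y, h)]" using galois_surj by blast
    define F where "F u h' = (\<Sum>(c,g)\<leftarrow>\<alpha> a. sA (\<phi> (h' * g)) (u * c))" for u h'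
    have F: "bilinear_map sA sH sA F"
      by (rule bilinear_mapI) (simp_all add: F_def asimps sum_list_add_pairs scale_sum_list_A)
    have "(\<Sum>(c,g)\<leftarrow>\<alpha> y'. F (x * c) g) = x * Phi (y' * a)" for x y'
      by (simp add: F_def Phi_map_def alpha_mult_sum[OF vector_space_A phi_slice_A]
          sum_list_pairs_mult_left mult.assoc)
    then have "(\<Sum>(u,v)\<leftarrow>galois_map \<alpha> xs. F u v) = 0"
      unfolding sum_list_galois_map by (simp add: null)
    with teq2_sum_eq[OF xs vector_space_A F] show ?thesis by (simp add: F_def)
  qed
  fix h
  obtain xs where xs: "teq2 sA sH (galois_map \<alpha> xs) [(a, h)]" using galois_surj by blast
  have "(\<Sum>(c,g)\<leftarrow>\<alpha> a. sA (\<phi> (g * S h)) c) = (\<Sum>(x,y)\<leftarrow>xs. Phi x * y)"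
    using Phi_galois_preimage[where ell = "\<lambda>x. x", OF _ _ xs] by (simp add: lin_def)
  moreover have "p j * (\<Sum>(c,g)\<leftarrow>\<alpha> a. sA (\<phi> (g * S h)) c) = 0" for j
  proof -
    have "bilinear_map sA sH sA (\<lambda>u g. sA (\<phi> (g * S h)) u)"
      by (rule bilinear_mapI) (simp_all add: asimps)
    then show ?thesis
      using left_mult_alpha_sum_eq_0[OF slices] by (simp add: sum_list_pairs_mult_left)
  qed
  ultimately show "(\<Sum>(c,g)\<leftarrow>\<alpha> a. sA (\<phi> (g * S h)) c) = 0"
    using eq_0_if_left_p_null by blast
qed

lemma phi_A_delta_invariant:
  "(\<Sum>(x,h)\<leftarrow>\<alpha> a. sH (phi_A sA \<alpha> \<phi> I p x) h) = sH (phi_A sA \<alpha> \<phi> I p a) \<delta>"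
proof -
  note l = scrS_lin
  define \<tau> where "\<tau> y g h = sH (scrS_lin y * \<phi> g) h" for y g h
  have \<tau>: "trilinear_map sA sH sH sH \<tau>"
    by (rule trilinear_mapI) (simp_all add: \<tau>_def hsimps lin_add[OF l] lin_scale[OF l])
  have "(\<Sum>(x,h)\<leftarrow>\<alpha> a. sH (phi_A sA \<alpha> \<phi> I p x) h) = (\<Sum>(x,h)\<leftarrow>\<alpha> a. \<Sum>(y,g)\<leftarrow>\<alpha> x. \<tau> y g h)"
    by (simp add: phi_A_eq Phi_map_def \<tau>_def lin_sum_list[OF l] lin_scale[OF l] sum_list_scale_H
        mult.commute)
  also have "\<dots> = (\<Sum>(x,h)\<leftarrow>\<alpha> a. \<Sum>(h1,h2)\<leftarrow>\<Delta> h. \<tau> x h1 h2)"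
    by (rule alpha_coassoc_sum[OF vector_space_H \<tau>])
  also have "\<dots> = (\<Sum>(x,h)\<leftarrow>\<alpha> a. sH (scrS_lin x) (\<Sum>(h1,h2)\<leftarrow>\<Delta> h. sH (\<phi> h1) h2))"
    by (simp add: \<tau>_def scale_sum_list_H)
  also have "\<dots> = sH (phi_A sA \<alpha> \<phi> I p a) \<delta>"
    by (simp add: phi_slice_modular phi_A_eq Phi_map_def lin_sum_list[OF l] lin_scale[OF l]
        sum_list_scale_H mult.commute)
  finally show ?thesis .
qed

end

theorem mainTheorem16:
  fixes sH :: "'k::field \<Rightarrow> 'h::ring_1 \<Rightarrow> 'h"
    and sA :: "'k \<Rightarrow> 'a::ring \<Rightarrow> 'a"
    and \<Delta> :: "'h \<Rightarrow> ('h \<times> 'h) list" and \<epsilon> :: "'h \<Rightarrow> 'k" and S :: "'h \<Rightarrow> 'h"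
    and \<phi> :: "'h \<Rightarrow> 'k" and \<delta> :: 'h
    and \<alpha> :: "'a \<Rightarrow> ('a \<times> 'h) list" and I :: "'i set" and p :: "'i \<Rightarrow> 'a"
  assumes "hopf_with_integrals sH \<Delta> \<epsilon> S \<phi>"
    and "modular_element sH \<Delta> S \<phi> \<delta>"
    and "I_galois_object sA sH \<Delta> \<epsilon> \<alpha> I p"
  shows "(\<forall>a. (\<forall>a'. phi_A sA \<alpha> \<phi> I p (a * a') = 0) \<longrightarrow> a = 0)
       \<and> (\<forall>a'. (\<forall>a. phi_A sA \<alpha> \<phi> I p (a * a') = 0) \<longrightarrow> a' = 0)
       \<and> (\<forall>a. (\<Sum>(x,h)\<leftarrow>\<alpha> a. sH (phi_A sA \<alpha> \<phi> I p x) h) = sH (phi_A sA \<alpha> \<phi> I p a) \<delta>)"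
proof -
  interpret galois_object sH \<Delta> \<epsilon> S \<phi> \<delta> sA \<alpha> I p
    using assms by (simp add: galois_object_def hopf_modular_def galois_object_axioms_def)
  show ?thesis
    using phi_A_faithful_left phi_A_faithful_right phi_A_delta_invariant by blast
qed

end
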